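(* There exists a function $\chi_{\ge1}\in C^\infty([0,\infty))$ such that $\chi_{\ge1}(x)=0$ for $x\le1$, $\chi_{\ge1}(x)=1$ for $x\ge2$, and $$\int_0^\infty\frac{\chi_{\ge1}(x)}{x^3}dx=\int_0^\infty x^3(1-\chi_{\ge1}(x))dx=\int_0^\infty x^3\log(x)(1-\chi_{\ge1}(x))dx=0.$$ Moreover, for any such function, for every $k\ge0$ there is $C_k>0$ (and there is $C>0$) such that the Hankel transform of order 1 of $x\mapsto\chi_{\ge1}(x)/x^5$ satisfies $$\Big|\widehat{\tfrac{\chi_{\ge1}(\cdot)}{(\cdot)^5}}(\eta)\Big|\le\begin{cases}C\eta^3\langle\log(\eta)\rangle, & \eta<1,\\ \dfrac{C_k}{\eta^k}, & \eta\ge1.\end{cases}$$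
   Context: The Hankel transform of order 1 is $\widehat f(\xi)=\int_0^\infty J_1(r\xi)f(r)\,r\,dr$, where $J_1$ is the Bessel function of order 1; $\langle x\rangle=\sqrt{1+x^2}$. *)

theory Defs
  imports "HOL-Analysis.Analysis"
begin

definition besselJ1 :: "real \<Rightarrow> real" where
  "besselJ1 x = (\<Sum>m. (-1) ^ m / (fact m * fact (m + 1)) * (x / 2) ^ (2 * m + 1))"

definition hankel1 :: "(real \<Rightarrow> real) \<Rightarrow> real \<Rightarrow> real" where
  "hankel1 f \<xi> = (LBINT r:{0<..}. besselJ1 (r * \<xi>) * f r * r)"

definition jbr :: "real \<Rightarrow> real" where
  "jbr x = sqrt (1 + x\<^sup>2)"

definition smooth_nonneg :: "(real \<Rightarrow> real) \<Rightarrow> bool" where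
  "smooth_nonneg f \<longleftrightarrow> (\<exists>D :: nat \<Rightarrow> real \<Rightarrow> real.
      (\<forall>x\<ge>0. D 0 x = f x) \<and>
      (\<forall>n. \<forall>x\<ge>0. (D n has_real_derivative D (Suc n) x) (at x within {0..})))"

definition good_cutoff :: "(real \<Rightarrow> real) \<Rightarrow> bool" where
  "good_cutoff chi \<longleftrightarrow> smooth_nonneg chi
     \<and> (\<forall>x. 0 \<le> x \<and> x \<le> 1 \<longrightarrow> chi x = 0)
     \<and> (\<forall>x\<ge>2. chi x = 1)
     \<and> set_integrable lborel {0<..} (\<lambda>x. chi x / x ^ 3)
     \<and> (LBINT x:{0<..}. chi x / x ^ 3) = 0
     \<and> set_integrable lborel {0<..} (\<lambda>x. x ^ 3 * (1 - chi x))
     \<and> (LBINT x:{0<..}. x ^ 3 * (1 - chi x)) = 0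
     \<and> set_integrable lborel {0<..} (\<lambda>x. x ^ 3 * ln x * (1 - chi x))
     \<and> (LBINT x:{0<..}. x ^ 3 * ln x * (1 - chi x)) = 0"

end

(*
  The hypothesis int chi(x)/x^3 dx = 0 allows one to replace J_1(r eta) by J_1(r eta) - r eta/2
  in the Hankel transform of chi(x)/x^5, and |J_1(s) - s/2| <= C s^3/(1 + s^2) reduces the estimate to
  eta^3 * int_1^oo dr / (r (1 + r^2 eta^2)) = eta^3 (- log eta + log (1 + eta^2) / 2).

  Since J_1(r eta) solves Bessel's equation, two integrations by parts give
  int J_1(r eta) G(r) dr = - eta^-2 int J_1(r eta) (G'' - G'/r) dr.  Starting from G = chi(r)/r^4, every
  iterate is a combination of derivatives of chi with coefficients polynomial in 1/r; as chi is constant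
  beyond 2, it decays like r^-2 and is integrable.  Iterating m times gives O(eta^-2m).

  Take a smooth step built from the standard bump b on (1,2) and correct it by a combination
  of b, L b and L^2 b, where L = x d/dx + 4.  The adjoint of L, w |-> 3 w - x w', kills x^3 and maps
  x^3 log x to -x^3 and x^-3 to 6 x^-3, so the three moment conditions become a triangular linear
  system with nonzero diagonal.
*)
theory Submission
  imports Defs "HOL-Computational_Algebra.Polynomial" "HOL-Real_Asymp.Real_Asymp"
begin

section \<open>The Bessel functions \<open>J\<^sub>0\<close> and \<open>J\<^sub>1\<close>\<close>

definition besselJ1_coeff :: "nat \<Rightarrow> real" where
  "besselJ1_coeff n =
     (if odd n then (-1) ^ (n div 2) / (fact (n div 2) * fact (Suc (n div 2)) * 2 ^ n) else 0)"

definition besselJ0_coeff :: "nat \<Rightarrow> real" where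
  "besselJ0_coeff n = (if even n then (-1) ^ (n div 2) / (fact (n div 2) ^ 2 * 2 ^ n) else 0)"

definition besselJ0 :: "real \<Rightarrow> real" where
  "besselJ0 x = (\<Sum>n. besselJ0_coeff n * x ^ n)"

definition powser_shift :: "(nat \<Rightarrow> real) \<Rightarrow> nat \<Rightarrow> real" where
  "powser_shift c n = (case n of 0 \<Rightarrow> 0 | Suc m \<Rightarrow> c m)"

lemma fact_le_fact_mult_fact_pow2:
  assumes "k \<le> n"
  shows "fact n \<le> (fact k * fact (n - k) * 2 ^ n :: real)"
proof -
  have "fact n = (fact k * fact (n - k) * real (n choose k) :: real)"
    using binomial_fact_lemma[OF assms, THEN arg_cong[where f=real]] by simp
  also have "\<dots> \<le> fact k * fact (n - k) * 2 ^ n"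
    using binomial_le_pow2[of n k, THEN of_nat_mono[where 'a=real]] by (intro mult_left_mono) auto
  finally show ?thesis .
qed

lemma abs_besselJ1_coeff_le: "\<bar>besselJ1_coeff n\<bar> \<le> 1 / fact n"
proof (cases "odd n")
  case True
  then obtain m where n: "n = 2 * m + 1" by (metis oddE)
  have "fact n \<le> (fact m * fact (Suc m) * 2 ^ n :: real)"
    using fact_le_fact_mult_fact_pow2[of m n] n by (simp add: Suc_diff_le)
  then show ?thesis
    using n by (simp add: besselJ1_coeff_def abs_mult frac_le)
qed (simp add: besselJ1_coeff_def)

lemma abs_besselJ0_coeff_le: "\<bar>besselJ0_coeff n\<bar> \<le> 1 / fact n"
proof (cases "even n")
  case True
  then obtain m where n: "n = 2 * m" by (metis evenE)
  have "fact n \<le> (fact m ^ 2 * 2 ^ n :: real)"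
    using fact_le_fact_mult_fact_pow2[of m n] n by (simp add: power2_eq_square mult_2)
  then show ?thesis
    using n by (simp add: besselJ0_coeff_def abs_mult frac_le)
qed (simp add: besselJ0_coeff_def)

lemma summable_powser_if_fact_bounded:
  assumes "\<And>n. \<bar>c n\<bar> \<le> 1 / fact n"
  shows "summable (\<lambda>n. c n * (x::real) ^ n)"
proof (rule summable_comparison_test')
  show "summable (\<lambda>n. \<bar>x\<bar> ^ n / fact n)"
    using exp_converges[of "\<bar>x\<bar>"] by (simp add: sums_iff divide_inverse mult.commute)
  fix n
  show "norm (c n * x ^ n) \<le> \<bar>x\<bar> ^ n / fact n"
    using mult_right_mono[OF assms[of n], of "\<bar>x\<bar> ^ n"] by (simp add: abs_mult power_abs)
qed

lemma summable_besselJ1_coeff: "summable (\<lambda>n. besselJ1_coeff n * x ^ n)"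
  by (rule summable_powser_if_fact_bounded[OF abs_besselJ1_coeff_le])

lemma summable_besselJ0_coeff: "summable (\<lambda>n. besselJ0_coeff n * x ^ n)"
  by (rule summable_powser_if_fact_bounded[OF abs_besselJ0_coeff_le])

lemma besselJ1_eq_powser: "besselJ1 x = (\<Sum>n. besselJ1_coeff n * x ^ n)"
proof -
  have "(\<lambda>m. besselJ1_coeff (2 * m + 1) * x ^ (2 * m + 1)) sums (\<Sum>n. besselJ1_coeff n * x ^ n)"
  proof (rule sums_mono_reindex[THEN iffD2, OF _ _ summable_sums[OF summable_besselJ1_coeff]])
    show "strict_mono (\<lambda>m::nat. 2 * m + 1)" by (auto simp: strict_mono_def)
    show "besselJ1_coeff n * x ^ n = 0" if "n \<notin> range (\<lambda>m::nat. 2 * m + 1)" for n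
      using that by (auto simp: besselJ1_coeff_def elim!: oddE)
  qed
  then show ?thesis
    by (simp add: besselJ1_def besselJ1_coeff_def power_divide sums_iff)
qed

lemma sums_powser_shift:
  assumes "(\<lambda>n. c n * x ^ n) sums s"
  shows "(\<lambda>n. powser_shift c n * x ^ n) sums (x * s)"
proof -
  have "(\<lambda>n. powser_shift c (Suc n) * x ^ Suc n) sums (x * s)"
    using sums_mult[OF assms, of x] by (simp add: powser_shift_def mult_ac)
  then show ?thesis
    by (subst (asm) sums_Suc_iff) (simp add: powser_shift_def)
qed

lemma diffs_besselJ0_coeff: "diffs besselJ0_coeff = (\<lambda>n. - besselJ1_coeff n)"
proof
  fix n
  show "diffs besselJ0_coeff n = - besselJ1_coeff n"
  proof (cases "odd n")
    case True
    then obtain m where n: "n = 2 * m + 1" by (metis oddE)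
    have "diffs besselJ0_coeff n = (2 * (real m + 1)) * (- ((-1) ^ m) / (((real m + 1) * fact m) ^ 2 * (4 * 2 ^ (2 * m))))"
      by (simp add: diffs_def besselJ0_coeff_def n power_add add.commute)
    also have "\<dots> = - ((-1) ^ m / (fact m * ((real m + 1) * fact m) * (2 * 2 ^ (2 * m))))"
    proof -
      have key: "(2 * q) * (- s / ((q * F) ^ 2 * (4 * P))) = - (s / (F * (q * F) * (2 * P)))"
        if "q \<noteq> 0" "F \<noteq> 0" "P \<noteq> 0" for q F P s :: real
        using that by (simp add: field_simps power2_eq_square)
      show ?thesis by (rule key) auto
    qed
    finally show ?thesis
      by (simp add: besselJ1_coeff_def n algebra_simps)
  qed (auto simp: diffs_def besselJ0_coeff_def besselJ1_coeff_def)
qed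

lemma diffs_powser_shift_besselJ1_coeff:
  "diffs (powser_shift besselJ1_coeff) = powser_shift besselJ0_coeff"
proof
  fix n
  show "diffs (powser_shift besselJ1_coeff) n = powser_shift besselJ0_coeff n"
  proof (cases "odd n")
    case True
    then obtain m where n: "n = 2 * m + 1" by (metis oddE)
    have "diffs (powser_shift besselJ1_coeff) n
        = (2 * (real m + 1)) * ((-1) ^ m / (fact m * ((real m + 1) * fact m) * (2 * 2 ^ (2 * m))))"
      by (simp add: diffs_def powser_shift_def besselJ1_coeff_def n add.commute)
    also have "\<dots> = (-1) ^ m / (fact m ^ 2 * 2 ^ (2 * m))"
    proof -
      have key: "(2 * q) * (s / (F * (q * F) * (2 * P))) = s / (F ^ 2 * P)"
        if "q \<noteq> 0" "F \<noteq> 0" "P \<noteq> 0" for q F P s :: real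
        using that by (simp add: field_simps power2_eq_square)
      show ?thesis by (rule key) auto
    qed
    finally show ?thesis
      by (simp add: powser_shift_def besselJ0_coeff_def n)
  qed (auto simp: diffs_def powser_shift_def besselJ0_coeff_def besselJ1_coeff_def split: nat.split)
qed
lemma has_real_derivative_besselJ0: "(besselJ0 has_real_derivative - besselJ1 x) (at x)"
proof -
  have "(besselJ0 has_real_derivative (\<Sum>n. diffs besselJ0_coeff n * x ^ n)) (at x)"
    unfolding besselJ0_def[abs_def]
    by (rule termdiffs_strong_converges_everywhere[OF summable_besselJ0_coeff])
  then show ?thesis
    by (simp add: diffs_besselJ0_coeff besselJ1_eq_powser suminf_minus[OF summable_besselJ1_coeff])
qed

lemma has_real_derivative_mult_besselJ1:
  "((\<lambda>x. x * besselJ1 x) has_real_derivative x * besselJ0 x) (at x)"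
proof -
  have J1: "(\<lambda>n. powser_shift besselJ1_coeff n * y ^ n) sums (y * besselJ1 y)" for y
    using sums_powser_shift[OF summable_sums[OF summable_besselJ1_coeff]] by (simp add: besselJ1_eq_powser)
  have J0: "(\<lambda>n. powser_shift besselJ0_coeff n * y ^ n) sums (y * besselJ0 y)" for y
    using sums_powser_shift[OF summable_sums[OF summable_besselJ0_coeff]] by (simp add: besselJ0_def)
  have "((\<lambda>x. \<Sum>n. powser_shift besselJ1_coeff n * x ^ n) has_real_derivative
      (\<Sum>n. diffs (powser_shift besselJ1_coeff) n * x ^ n)) (at x)"
    using J1 by (intro termdiffs_strong_converges_everywhere) (rule sums_summable)
  then show ?thesis
    using J0 J1 by (simp add: diffs_powser_shift_besselJ1_coeff sums_iff)
qed

lemma isCont_besselJ1: "isCont besselJ1 x"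
  unfolding besselJ1_eq_powser[abs_def]
  by (rule isCont_powser_converges_everywhere[OF summable_besselJ1_coeff])

lemma isCont_besselJ0: "isCont besselJ0 x"
  using has_real_derivative_besselJ0 DERIV_isCont by blast

lemma has_real_derivative_besselJ1:
  assumes "x \<noteq> 0"
  shows "(besselJ1 has_real_derivative besselJ0 x - besselJ1 x / x) (at x)"
proof -
  have "(besselJ1 has_real_derivative (\<Sum>n. diffs besselJ1_coeff n * x ^ n)) (at x)"
    (is "(_ has_real_derivative ?d) _")
    unfolding besselJ1_eq_powser[abs_def]
    by (rule termdiffs_strong_converges_everywhere[OF summable_besselJ1_coeff])
  moreover from this have "((\<lambda>x. x * besselJ1 x) has_real_derivative besselJ1 x + x * ?d) (at x)"
    by (auto intro!: derivative_eq_intros)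
  then have "besselJ1 x + x * ?d = x * besselJ0 x"
    using DERIV_unique has_real_derivative_mult_besselJ1 by blast
  then have "?d = besselJ0 x - besselJ1 x / x"
    using assms by (simp add: field_simps)
  ultimately show ?thesis by simp
qed

lemma besselJ1_0 [simp]: "besselJ1 0 = 0"
  using powser_zero[of besselJ1_coeff] by (simp add: besselJ1_eq_powser besselJ1_coeff_def)

lemma besselJ0_0 [simp]: "besselJ0 0 = 1"
  using powser_zero[of besselJ0_coeff] by (simp add: besselJ0_def besselJ0_coeff_def)

text \<open>The energy \<open>J\<^sub>0\<^sup>2 + J\<^sub>1\<^sup>2\<close> has derivative \<open>-2 J\<^sub>1(x)\<^sup>2 / x\<close>, so it decreases on \<open>[0,\<infinity>)\<close>.\<close>
lemma besselJ0_sq_add_besselJ1_sq_le_1: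
  assumes "x \<ge> 0"
  shows "besselJ0 x ^ 2 + besselJ1 x ^ 2 \<le> 1"
proof -
  let ?E = "\<lambda>x. besselJ0 x ^ 2 + besselJ1 x ^ 2"
  have "?E x \<le> ?E 0"
  proof (rule DERIV_nonpos_imp_decreasing_open[OF assms])
    fix t :: real assume t: "0 < t" "t < x"
    have "(?E has_real_derivative - 2 * besselJ1 t ^ 2 / t) (at t)"
      using has_real_derivative_besselJ0[of t] has_real_derivative_besselJ1[of t] t
      by (auto intro!: derivative_eq_intros simp: field_simps power2_eq_square)
    moreover have "- 2 * besselJ1 t ^ 2 / t \<le> 0"
      using t by (simp add: divide_nonpos_pos)
    ultimately show "\<exists>y. (?E has_real_derivative y) (at t) \<and> y \<le> 0" by blast
  qed (intro continuous_at_imp_continuous_on ballI continuous_intros isCont_besselJ0 isCont_besselJ1)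
  then show ?thesis by simp
qed

lemma abs_besselJ1_le_1: "x \<ge> 0 \<Longrightarrow> \<bar>besselJ1 x\<bar> \<le> 1"
  unfolding abs_square_le_1[symmetric]
  by (rule order_trans[OF _ besselJ0_sq_add_besselJ1_sq_le_1]) simp_all

lemma abs_besselJ0_le_1: "x \<ge> 0 \<Longrightarrow> \<bar>besselJ0 x\<bar> \<le> 1"
  unfolding abs_square_le_1[symmetric]
  by (rule order_trans[OF _ besselJ0_sq_add_besselJ1_sq_le_1]) simp_all

lemma abs_besselJ1_sub_half_le_cube:
  assumes "\<bar>x\<bar> \<le> 1"
  shows "\<bar>besselJ1 x - x / 2\<bar> \<le> exp 1 * \<bar>x\<bar> ^ 3"
proof -
  let ?f = "\<lambda>n. besselJ1_coeff n * x ^ n"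
  have "(\<lambda>i. ?f (i + 3)) sums (besselJ1 x - (\<Sum>i<3. ?f i))"
    using summable_sums[OF summable_besselJ1_coeff]
    by (subst sums_iff_shift) (simp add: besselJ1_eq_powser)
  moreover have "(\<Sum>i<3. ?f i) = x / 2"
    by (simp add: eval_nat_numeral besselJ1_coeff_def)
  ultimately have tail: "(\<lambda>i. ?f (i + 3)) sums (besselJ1 x - x / 2)" by simp
  have bound: "\<bar>?f (i + 3)\<bar> \<le> \<bar>x\<bar> ^ 3 * (1 / fact i)" for i
  proof -
    have "\<bar>?f (i + 3)\<bar> = \<bar>besselJ1_coeff (i + 3)\<bar> * (\<bar>x\<bar> ^ i * \<bar>x\<bar> ^ 3)"
      by (simp add: abs_mult power_abs power_add)
    also have "\<dots> \<le> (1 / fact (i + 3)) * (1 * \<bar>x\<bar> ^ 3)"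
      using abs_besselJ1_coeff_le assms by (intro mult_mono) (auto simp: power_le_one)
    also have "\<dots> \<le> (1 / fact i) * (1 * \<bar>x\<bar> ^ 3)"
      by (intro mult_right_mono divide_left_mono) (auto simp: fact_mono)
    finally show ?thesis by simp
  qed
  have exp1: "(\<lambda>i. \<bar>x\<bar> ^ 3 * (1 / fact i)) sums (\<bar>x\<bar> ^ 3 * exp 1)"
    using exp_converges[of "1::real"] by (intro sums_mult) (simp add: divide_inverse)
  have summable_abs: "summable (\<lambda>i. \<bar>?f (i + 3)\<bar>)"
    by (rule summable_comparison_test'[OF sums_summable[OF exp1]]) (use bound in auto)
  have "\<bar>besselJ1 x - x / 2\<bar> = \<bar>\<Sum>i. ?f (i + 3)\<bar>"
    using tail by (simp add: sums_iff)
  also have "\<dots> \<le> (\<Sum>i. \<bar>?f (i + 3)\<bar>)"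
    by (rule summable_rabs[OF summable_abs])
  also have "\<dots> \<le> (\<Sum>i. \<bar>x\<bar> ^ 3 * (1 / fact i))"
    by (rule suminf_le[OF bound summable_abs sums_summable[OF exp1]])
  also have "\<dots> = exp 1 * \<bar>x\<bar> ^ 3"
    using exp1 by (simp add: sums_iff mult.commute)
  finally show ?thesis .
qed

lemma abs_besselJ1_sub_half_le:
  assumes "x \<ge> 0"
  shows "\<bar>besselJ1 x - x / 2\<bar> \<le> (2 * exp 1 + 3) * (x ^ 3 / (1 + x ^ 2))"
proof (cases "x \<le> 1")
  case True
  have "x ^ 3 * x ^ 2 \<le> x ^ 3"
    using True assms by (intro mult_left_le) (auto simp: power_le_one)
  then have cube_le: "x ^ 3 \<le> 2 * (x ^ 3 / (1 + x ^ 2))"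
    by (simp add: field_simps add_pos_nonneg)
  have "\<bar>besselJ1 x - x / 2\<bar> \<le> exp 1 * x ^ 3"
    using abs_besselJ1_sub_half_le_cube[of x] True assms by simp
  also have "\<dots> \<le> exp 1 * (2 * (x ^ 3 / (1 + x ^ 2)))"
    using cube_le by (intro mult_left_mono) simp_all
  also have "\<dots> = (2 * exp 1) * (x ^ 3 / (1 + x ^ 2))"
    by (simp only: mult_ac)
  also have "\<dots> \<le> (2 * exp 1 + 3) * (x ^ 3 / (1 + x ^ 2))"
    using assms by (intro mult_right_mono) auto
  finally show ?thesis .
next
  case False
  then have "1 \<le> x ^ 3" "x ^ 1 \<le> x ^ 3" "x ^ 2 \<le> x ^ 3"
    using power_increasing[of 1 3 x] power_increasing[of 2 3 x] by (auto intro: one_le_power)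
  moreover have "(1 + x / 2) * (1 + x ^ 2) = 1 + x / 2 + x ^ 2 + x ^ 3 / 2"
    by (simp add: algebra_simps power2_eq_square power3_eq_cube)
  ultimately have "(1 + x / 2) * (1 + x ^ 2) \<le> 3 * x ^ 3"
    by simp
  then have bound: "1 + x / 2 \<le> 3 * (x ^ 3 / (1 + x ^ 2))"
    by (simp add: field_simps add_pos_nonneg)
  have "\<bar>besselJ1 x - x / 2\<bar> \<le> 1 + x / 2"
    using abs_besselJ1_le_1[OF assms] assms by simp
  also have "\<dots> \<le> 3 * (x ^ 3 / (1 + x ^ 2))"
    by (rule bound)
  also have "\<dots> \<le> (2 * exp 1 + 3) * (x ^ 3 / (1 + x ^ 2))"
    using assms by (intro mult_right_mono) auto
  finally show ?thesis .
qed

lemma abs_besselJ1_sub_half_div_pow4_le: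
  assumes "r > 0" "\<eta> \<ge> 0"
  shows "\<bar>(besselJ1 (r * \<eta>) - r * \<eta> / 2) / r ^ 4\<bar> \<le> (2 * exp 1 + 3) * \<eta> ^ 3 * (1 / (r * (1 + (r * \<eta>) ^ 2)))"
proof -
  have "\<bar>besselJ1 (r * \<eta>) - r * \<eta> / 2\<bar> / r ^ 4 \<le> (2 * exp 1 + 3) * ((r * \<eta>) ^ 3 / (1 + (r * \<eta>) ^ 2)) / r ^ 4"
    using abs_besselJ1_sub_half_le[of "r * \<eta>"] assms by (intro divide_right_mono) auto
  also have "\<dots> = (2 * exp 1 + 3) * \<eta> ^ 3 * (1 / (r * (1 + (r * \<eta>) ^ 2)))"
    using assms add_pos_nonneg[of 1 "(r * \<eta>) ^ 2"]
    by (simp add: divide_simps) (simp add: eval_nat_numeral algebra_simps)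
  finally show ?thesis
    by (simp add: abs_divide)
qed

section \<open>Integrals on half-lines\<close>

lemma set_integrable_inverse_square_Ioi_1: "set_integrable lborel {1<..} (\<lambda>r::real. 1 / r ^ 2)"
proof -
  have "set_integrable lborel (einterval (ereal 1) \<infinity>) (\<lambda>r::real. 1 / r ^ 2)"
  proof (rule interval_integral_FTC_nonneg(1)[where F="\<lambda>r. - 1 / r" and A="- 1" and B=0])
    fix x assume "ereal 1 < ereal x" "ereal x < \<infinity>"
    then have "x > 0" by simp
    then show "((\<lambda>r. - 1 / r) has_real_derivative 1 / x ^ 2) (at x)"
      by (auto intro!: derivative_eq_intros simp: power2_eq_square)
    show "isCont (\<lambda>r. 1 / r ^ 2) x"
      using \<open>x > 0\<close> by (intro continuous_intros) auto
  next
    have "((\<lambda>r::real. - 1 / r) \<longlongrightarrow> - 1) (at_right 1)"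
      by (rule tendsto_eq_intros) auto
    then show "(((\<lambda>r. - 1 / r) \<circ> real_of_ereal) \<longlongrightarrow> - 1) (at_right (ereal 1))"
      by (simp add: ereal_tendsto_simps1)
    have "((\<lambda>r::real. - 1 / r) \<longlongrightarrow> 0) at_top"
      by (intro tendsto_divide_0[OF tendsto_const] filterlim_at_top_imp_at_infinity filterlim_ident)
    then show "(((\<lambda>r. - 1 / r) \<circ> real_of_ereal) \<longlongrightarrow> 0) (at_left \<infinity>)"
      by (simp add: ereal_tendsto_simps1)
  qed auto
  then show ?thesis by simp
qed

lemma set_integrable_Ioi_0_if_decay:
  fixes f :: "real \<Rightarrow> real"
  assumes cont: "continuous_on {0<..} f" and zero: "\<And>r. 0 < r \<Longrightarrow> r < 1 \<Longrightarrow> f r = 0"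
    and decay: "\<And>r. r \<ge> 1 \<Longrightarrow> \<bar>f r\<bar> \<le> C / r ^ 2"
  shows "set_integrable lborel {0<..} f"
  unfolding set_integrable_def
proof (rule Bochner_Integration.integrable_bound)
  show "integrable lborel (\<lambda>x. indicator {1<..} x *\<^sub>R (\<bar>C\<bar> * (1 / x ^ 2)))"
    using set_integrable_mult_right[OF set_integrable_inverse_square_Ioi_1, of "\<bar>C\<bar>"]
    unfolding set_integrable_def .
  show "(\<lambda>x. indicator {0<..} x *\<^sub>R f x) \<in> borel_measurable lborel"
    using borel_measurable_continuous_on_indicator[OF _ cont] by simp
  show "AE x in lborel. norm (indicator {0<..} x *\<^sub>R f x)
      \<le> norm (indicator {1<..} x *\<^sub>R (\<bar>C\<bar> * (1 / x ^ 2)))"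
    using AE_lborel_singleton[of 1]
  proof eventually_elim
    case (elim x)
    show ?case
    proof (cases "x > 1")
      case True
      then have "\<bar>f x\<bar> \<le> \<bar>C\<bar> / x ^ 2"
        using order_trans[OF decay[of x] divide_right_mono[OF abs_ge_self]] by simp
      then show ?thesis
        using True by (simp add: indicator_def)
    next
      case False
      then show ?thesis
        using elim zero[of x] by (auto simp: indicator_def)
    qed
  qed
qed

lemma set_integrable_Ioi_0_if_bounded_support:
  fixes f :: "real \<Rightarrow> real"
  assumes cont: "continuous_on {0<..} f" and zero: "\<And>x. x \<ge> 2 \<Longrightarrow> f x = 0"
    and bound: "\<And>x. 0 < x \<Longrightarrow> x < 2 \<Longrightarrow> \<bar>f x\<bar> \<le> B"
  shows "set_integrable lborel {0<..} f"
  unfolding set_integrable_def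
proof (rule Bochner_Integration.integrable_bound)
  show "integrable lborel (\<lambda>x::real. indicator {0..2} x *\<^sub>R B)"
    using borel_integrable_atLeastAtMost'[OF continuous_on_const] unfolding set_integrable_def .
  show "(\<lambda>x. indicator {0<..} x *\<^sub>R f x) \<in> borel_measurable lborel"
    using borel_measurable_continuous_on_indicator[OF _ cont] by simp
  show "AE x in lborel. norm (indicator {0<..} x *\<^sub>R f x) \<le> norm (indicator {0..2} x *\<^sub>R B)"
  proof (rule AE_I2)
    fix x :: real
    show "norm (indicator {0<..} x *\<^sub>R f x) \<le> norm (indicator {0..2} x *\<^sub>R B)"
      using bound[of x] zero[of x] by (cases "0 < x \<and> x < 2") (auto simp: indicator_def)
  qed
qed

lemma set_integral_eq_on_subset:
  assumes "B \<subseteq> A" "\<And>x. x \<in> A - B \<Longrightarrow> f x = 0"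
  shows "set_lebesgue_integral M A f = set_lebesgue_integral M B f"
    and "set_integrable M A f \<longleftrightarrow> set_integrable M B f"
proof -
  have "(\<lambda>x. indicator A x *\<^sub>R f x) = (\<lambda>x. indicator B x *\<^sub>R f x)"
    using assms by (auto simp: indicator_def fun_eq_iff)
  then show "set_lebesgue_integral M A f = set_lebesgue_integral M B f"
    and "set_integrable M A f \<longleftrightarrow> set_integrable M B f"
    unfolding set_lebesgue_integral_def set_integrable_def by simp_all
qed

lemma set_integral_Ioi_0_eq_Icc_1_2:
  fixes f :: "real \<Rightarrow> real"
  assumes "continuous_on {1..2} f" and "\<And>x. x > 0 \<Longrightarrow> x < 1 \<or> x > 2 \<Longrightarrow> f x = 0"
  shows "set_integrable lborel {0<..} f" and "(LBINT x:{0<..}. f x) = (LBINT x:{1..2}. f x)"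
proof -
  have subset: "{1..2} \<subseteq> ({0<..} :: real set)" by auto
  have zero: "\<And>x. x \<in> {0<..} - {1..2} \<Longrightarrow> f x = 0"
    using assms(2) by force
  show "(LBINT x:{0<..}. f x) = (LBINT x:{1..2}. f x)"
    by (rule set_integral_eq_on_subset(1)[OF subset zero])
  show "set_integrable lborel {0<..} f"
    using set_integral_eq_on_subset(2)[OF subset zero] borel_integrable_atLeastAtMost'[OF assms(1)]
    by simp
qed

lemma set_integral_pos_Icc:
  fixes h :: "real \<Rightarrow> real"
  assumes cont: "continuous_on {a..b} h" and nonneg: "\<And>x. x \<in> {a..b} \<Longrightarrow> h x \<ge> 0"
    and pos: "c \<in> {a..b}" "h c > 0" and "a < b"
  shows "(LBINT x:{a..b}. h x) > 0"
proof -
  have "(LBINT x:{a..b}. h x) = integral {a..b} h"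
    by (rule set_borel_integral_eq_integral(2)[OF borel_integrable_atLeastAtMost'[OF cont]])
  moreover have "integral {a..b} h \<ge> 0"
    using integrable_continuous_interval[OF cont] nonneg by (rule integral_nonneg)
  moreover have "integral {a..b} h \<noteq> 0"
  proof
    assume "integral {a..b} h = 0"
    then have "(h has_integral 0) (cbox a b)"
      using integrable_integral[OF integrable_continuous_interval[OF cont]] by simp
    then have "h c = 0"
      using cont nonneg pos \<open>a < b\<close>
      by (intro has_integral_0_cbox_imp_0[of a b h c]) auto
    then show False
      using pos by simp
  qed
  ultimately show ?thesis by simp
qed

lemma log_kernel_integral:
  assumes "\<eta> > 0"
  shows "set_integrable lborel {1<..} (\<lambda>r::real. 1 / (r * (1 + (r * \<eta>) ^ 2)))"
    and "(LBINT r:{1<..}. 1 / (r * (1 + (r * \<eta>) ^ 2))) = - ln \<eta> + ln (1 + \<eta> ^ 2) / 2"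
proof -
  define F where "F r = ln r - ln (1 + (r * \<eta>) ^ 2) / 2" for r :: real
  have pos: "1 + (r * \<eta>) ^ 2 > 0" for r :: real
    by (simp add: add_pos_nonneg)
  have deriv: "(F has_real_derivative 1 / (x * (1 + (x * \<eta>) ^ 2))) (at x)"
    if "ereal 1 < ereal x" "ereal x < \<infinity>" for x
    using that pos[of x] unfolding F_def
    by (auto intro!: derivative_eq_intros simp: divide_simps power2_eq_square)
  have cont: "isCont (\<lambda>r. 1 / (r * (1 + (r * \<eta>) ^ 2))) x"
    if "ereal 1 < ereal x" "ereal x < \<infinity>" for x
    using that pos[of x] by (intro continuous_intros) auto
  have nonneg: "AE x in lborel. ereal 1 < ereal x \<longrightarrow> ereal x < \<infinity> \<longrightarrow> 0 \<le> 1 / (x * (1 + (x * \<eta>) ^ 2))"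
    using pos by (auto intro!: AE_I2 divide_nonneg_pos)
  have "(F \<longlongrightarrow> F 1) (at_right 1)"
    unfolding F_def using pos[of 1] by (intro tendsto_intros) auto
  then have lim_1: "((F \<circ> real_of_ereal) \<longlongrightarrow> F 1) (at_right (ereal 1))"
    by (simp add: ereal_tendsto_simps1)
  have "(F \<longlongrightarrow> - ln \<eta>) at_top"
    using assms unfolding F_def by real_asymp (simp add: ln_realpow)
  then have lim_inf: "((F \<circ> real_of_ereal) \<longlongrightarrow> - ln \<eta>) (at_left \<infinity>)"
    by (simp add: ereal_tendsto_simps1)
  note FTC = interval_integral_FTC_nonneg[OF _ deriv cont nonneg lim_1 lim_inf]
  show "set_integrable lborel {1<..} (\<lambda>r::real. 1 / (r * (1 + (r * \<eta>) ^ 2)))"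
    using FTC(1) by simp
  show "(LBINT r:{1<..}. 1 / (r * (1 + (r * \<eta>) ^ 2))) = - ln \<eta> + ln (1 + \<eta> ^ 2) / 2"
    using FTC(2) by (simp add: interval_lebesgue_integral_def F_def)
qed

lemma abs_add_one_le_two_jbr: "\<bar>y\<bar> + 1 \<le> 2 * jbr y"
proof -
  have "\<bar>y\<bar> \<le> jbr y"
    unfolding jbr_def by (rule real_le_rsqrt) simp
  moreover have "1 \<le> jbr y"
    unfolding jbr_def by simp
  ultimately show ?thesis by simp
qed

lemma log_kernel_value_le_jbr:
  assumes "0 < \<eta>" "\<eta> < 1"
  shows "- ln \<eta> + ln (1 + \<eta> ^ 2) / 2 \<le> 2 * jbr (ln \<eta>)"
proof -
  have "ln (1 + \<eta> ^ 2) \<le> \<eta> ^ 2"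
    using ln_le_minus_one[of "1 + \<eta> ^ 2"] by (simp add: add_pos_nonneg)
  also have "\<eta> ^ 2 \<le> 1"
    using assms by (simp add: power_le_one)
  finally show ?thesis
    using abs_add_one_le_two_jbr[of "ln \<eta>"] by linarith
qed

section \<open>The Hankel transform of \<open>\<chi>(x)/x\<^sup>5\<close>\<close>

text \<open>This is where Bessel's equation for \<open>J\<^sub>1(r\<eta>)\<close> enters.\<close>
lemma has_real_derivative_besselJ1_boundary_term:
  assumes "\<eta> > 0" "x > 0"
    and G: "(G has_real_derivative G1 x) (at x)" and G1: "(G1 has_real_derivative G2) (at x)"
  shows "((\<lambda>r. besselJ1 (r * \<eta>) * G1 r - \<eta> * (besselJ0 (r * \<eta>) * G r)) has_real_derivative
           besselJ1 (x * \<eta>) * (G2 - G1 x / x) + \<eta> ^ 2 * (besselJ1 (x * \<eta>) * G x)) (at x)"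
proof -
  have "((\<lambda>r. besselJ1 (r * \<eta>)) has_real_derivative (besselJ0 (x * \<eta>) - besselJ1 (x * \<eta>) / (x * \<eta>)) * \<eta>) (at x)"
    by (rule DERIV_chain2[OF has_real_derivative_besselJ1, where g="\<lambda>r. r * \<eta>", simplified])
       (use assms in \<open>auto intro!: derivative_eq_intros\<close>)
  moreover have "((\<lambda>r. besselJ0 (r * \<eta>)) has_real_derivative - besselJ1 (x * \<eta>) * \<eta>) (at x)"
    by (rule DERIV_chain2[OF has_real_derivative_besselJ0]) (auto intro!: derivative_eq_intros)
  ultimately have "((\<lambda>r. besselJ1 (r * \<eta>) * G1 r - \<eta> * (besselJ0 (r * \<eta>) * G r)) has_real_derivative
      (besselJ0 (x * \<eta>) - besselJ1 (x * \<eta>) / (x * \<eta>)) * \<eta> * G1 x + G2 * besselJ1 (x * \<eta>)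
      - \<eta> * (- besselJ1 (x * \<eta>) * \<eta> * G x + G1 x * besselJ0 (x * \<eta>))) (at x)"
    by (intro DERIV_diff DERIV_mult DERIV_cmult G G1)
  moreover have "(besselJ0 (x * \<eta>) - besselJ1 (x * \<eta>) / (x * \<eta>)) * \<eta> * G1 x + G2 * besselJ1 (x * \<eta>)
      - \<eta> * (- besselJ1 (x * \<eta>) * \<eta> * G x + G1 x * besselJ0 (x * \<eta>))
      = besselJ1 (x * \<eta>) * (G2 - G1 x / x) + \<eta> ^ 2 * (besselJ1 (x * \<eta>) * G x)"
    using assms by (simp add: field_simps power2_eq_square)
  ultimately show ?thesis
    by simp
qed

lemma besselJ1_integral_by_parts:
  fixes G G1 G2 :: "real \<Rightarrow> real"
  assumes "\<eta> > 0"
    and G: "\<And>x. x > 0 \<Longrightarrow> (G has_real_derivative G1 x) (at x)"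
    and G1: "\<And>x. x > 0 \<Longrightarrow> (G1 has_real_derivative G2 x) (at x)"
    and G2: "continuous_on {0<..} G2"
    and at_0: "\<forall>\<^sub>F x in at_right 0. G x = 0 \<and> G1 x = 0"
    and at_top: "(G \<longlongrightarrow> 0) at_top" "(G1 \<longlongrightarrow> 0) at_top"
    and int_G: "set_integrable lborel {0<..} (\<lambda>r. besselJ1 (r * \<eta>) * G r)"
    and int_LG: "set_integrable lborel {0<..} (\<lambda>r. besselJ1 (r * \<eta>) * (G2 r - G1 r / r))"
  shows "(LBINT r:{0<..}. besselJ1 (r * \<eta>) * G r)
       = - (1 / \<eta> ^ 2) * (LBINT r:{0<..}. besselJ1 (r * \<eta>) * (G2 r - G1 r / r))"
proof -
  define \<phi> where "\<phi> r = besselJ1 (r * \<eta>)" for r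
  define \<psi> where "\<psi> r = besselJ0 (r * \<eta>)" for r
  define F where "F r = \<phi> r * G1 r - \<eta> * (\<psi> r * G r)" for r
  define f where "f r = \<phi> r * (G2 r - G1 r / r) + \<eta> ^ 2 * (\<phi> r * G r)" for r
  have bounded: "\<bar>\<phi> r\<bar> \<le> 1" "\<bar>\<psi> r\<bar> \<le> 1" if "r > 0" for r
    unfolding \<phi>_def \<psi>_def using that \<open>\<eta> > 0\<close> by (simp_all add: abs_besselJ1_le_1 abs_besselJ0_le_1)
  have int_f: "set_integrable lborel {0<..} f"
    unfolding f_def \<phi>_def by (intro set_integral_add(1) int_LG set_integrable_mult_right int_G)
  have "(LBINT x=ereal 0..\<infinity>. f x) = 0 - 0"
  proof (rule interval_integral_FTC_integrable[where F=F])
    fix x assume "ereal 0 < ereal x" "ereal x < \<infinity>"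
    then have x: "x > 0" by simp
    have "(F has_real_derivative f x) (at x)"
      unfolding F_def[abs_def] f_def \<phi>_def \<psi>_def
      by (rule has_real_derivative_besselJ1_boundary_term[OF \<open>\<eta> > 0\<close> x G[OF x] G1[OF x]])
    then show "(F has_vector_derivative f x) (at x)"
      by (simp add: has_real_derivative_iff_has_vector_derivative)
    have "isCont G x" "isCont G1 x"
      using G[OF x] G1[OF x] by (auto intro: DERIV_isCont)
    then show "isCont f x"
      unfolding f_def \<phi>_def using x G2
      by (auto intro!: continuous_intros continuous_at_compose[OF _ isCont_besselJ1, unfolded o_def]
          simp: continuous_on_eq_continuous_at)
  next
    show "set_integrable lborel (einterval (ereal 0) \<infinity>) f"
      using int_f by simp
    have "(F \<longlongrightarrow> 0) (at_right 0)"
      using at_0 by (intro tendsto_eventually) (auto elim!: eventually_mono simp: F_def)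
    then show "((F \<circ> real_of_ereal) \<longlongrightarrow> 0) (at_right (ereal 0))"
      by (simp add: ereal_tendsto_simps1)
    have "(F \<longlongrightarrow> 0) at_top"
    proof (rule Lim_null_comparison)
      show "\<forall>\<^sub>F x in at_top. norm (F x) \<le> \<bar>G1 x\<bar> + \<eta> * \<bar>G x\<bar>"
        unfolding eventually_at_top_linorder
      proof (intro exI[of _ 1] allI impI)
        fix x :: real assume "x \<ge> 1"
        then have "\<bar>\<phi> x * G1 x\<bar> \<le> \<bar>G1 x\<bar>" "\<bar>\<psi> x * G x\<bar> \<le> \<bar>G x\<bar>"
          using bounded[of x] by (auto simp: abs_mult intro: mult_left_le_one_le)
        then have "\<bar>\<phi> x * G1 x\<bar> + \<eta> * \<bar>\<psi> x * G x\<bar> \<le> \<bar>G1 x\<bar> + \<eta> * \<bar>G x\<bar>"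
          using \<open>\<eta> > 0\<close> by (intro add_mono mult_left_mono) auto
        moreover have "norm (F x) \<le> \<bar>\<phi> x * G1 x\<bar> + \<eta> * \<bar>\<psi> x * G x\<bar>"
          unfolding F_def using \<open>\<eta> > 0\<close> abs_triangle_ineq4[of "\<phi> x * G1 x" "\<eta> * (\<psi> x * G x)"]
          by (simp add: abs_mult)
        ultimately show "norm (F x) \<le> \<bar>G1 x\<bar> + \<eta> * \<bar>G x\<bar>"
          by linarith
      qed
      show "((\<lambda>x. \<bar>G1 x\<bar> + \<eta> * \<bar>G x\<bar>) \<longlongrightarrow> 0) at_top"
        using tendsto_add[OF tendsto_rabs[OF at_top(2)] tendsto_mult[OF tendsto_const tendsto_rabs[OF at_top(1)]]]
        by simp
    qed
    then show "((F \<circ> real_of_ereal) \<longlongrightarrow> 0) (at_left \<infinity>)"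
      by (simp add: ereal_tendsto_simps1)
  qed simp
  then have "(LBINT r:{0<..}. f r) = 0"
    by (simp add: interval_lebesgue_integral_def)
  then have "(LBINT r:{0<..}. \<phi> r * (G2 r - G1 r / r)) + \<eta> ^ 2 * (LBINT r:{0<..}. \<phi> r * G r) = 0"
    unfolding f_def \<phi>_def using set_integral_add(2)[OF int_LG set_integrable_mult_right[OF int_G]] by simp
  then show ?thesis
    using \<open>\<eta> > 0\<close> by (simp add: \<phi>_def field_simps)
qed

lemma DERIV_eq_0_if_const_on_open:
  assumes "open S" "x \<in> S" "\<And>y. y \<in> S \<Longrightarrow> f y = c" "(f has_real_derivative d) (at x)"
  shows "d = 0"
proof -
  have "(f has_real_derivative 0) (at x)"
    by (rule has_field_derivative_transform_within_open[of "\<lambda>_. c", OF _ assms(1,2)])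
       (use assms(3) in auto)
  then show ?thesis
    using DERIV_unique assms(4) by blast
qed

lemma has_real_derivative_poly_inverse:
  assumes "r \<noteq> 0"
  shows "((\<lambda>r. poly p (inverse r)) has_real_derivative
           - poly (pCons 0 (pCons 0 (pderiv p))) (inverse r)) (at r)"
  using DERIV_chain2[OF poly_DERIV DERIV_inverse[OF assms], of p]
  by (simp add: power2_eq_square mult_ac)

text \<open>The coefficient of \<open>\<chi>\<close> itself has a double zero at \<open>0\<close>; since only that term survives beyond
  \<open>r = 2\<close>, the corresponding jet combination decays like \<open>r\<^sup>-\<^sup>2\<close>.\<close>
definition decaying_coeffs :: "(nat \<Rightarrow> real poly) \<Rightarrow> bool" where
  "decaying_coeffs ps \<longleftrightarrow> coeff (ps 0) 0 = 0 \<and> coeff (ps 0) 1 = 0"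

lemma decaying_coeffsE:
  assumes "decaying_coeffs ps"
  obtains q where "ps 0 = pCons 0 (pCons 0 q)"
proof -
  obtain a p where "ps 0 = pCons a p" by (cases "ps 0")
  moreover obtain b q where "p = pCons b q" by (cases p)
  ultimately show ?thesis
    using assms that by (auto simp: decaying_coeffs_def)
qed

locale smooth_cutoff =
  fixes chi :: "real \<Rightarrow> real" and D :: "nat \<Rightarrow> real \<Rightarrow> real"
  assumes jet_0: "\<And>x. x \<ge> 0 \<Longrightarrow> D 0 x = chi x"
    and jet_deriv: "\<And>n x. x \<ge> 0 \<Longrightarrow> (D n has_real_derivative D (Suc n) x) (at x within {0..})"
    and vanishes_le_1: "\<And>x. 0 \<le> x \<Longrightarrow> x \<le> 1 \<Longrightarrow> chi x = 0"
    and eq_1_ge_2: "\<And>x. x \<ge> 2 \<Longrightarrow> chi x = 1"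
begin

lemma jet_has_real_derivative: "r > 0 \<Longrightarrow> (D n has_real_derivative D (Suc n) r) (at r)"
  using jet_deriv[of r n] at_within_interior[of r "{0..}"] by simp

lemma jet_below_1: "0 < r \<Longrightarrow> r < 1 \<Longrightarrow> D n r = 0"
proof (induction n arbitrary: r)
  case 0
  then show ?case using jet_0 vanishes_le_1 by simp
next
  case (Suc n)
  show ?case
    by (rule DERIV_eq_0_if_const_on_open[of "{0<..<1}" r "D n" 0])
       (use Suc jet_has_real_derivative in auto)
qed

lemma jet_above_2: "r > 2 \<Longrightarrow> D 0 r = 1 \<and> D (Suc n) r = 0"
proof (induction n arbitrary: r)
  case 0
  have "D 1 r = 0"
    by (rule DERIV_eq_0_if_const_on_open[of "{2<..}" r "D 0" 1])
       (use 0 jet_has_real_derivative jet_0 eq_1_ge_2 in auto)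
  then show ?case using 0 jet_0 eq_1_ge_2 by simp
next
  case (Suc n)
  have "D (Suc (Suc n)) r = 0"
    by (rule DERIV_eq_0_if_const_on_open[of "{2<..}" r "D (Suc n)" 0])
       (use Suc jet_has_real_derivative in auto)
  then show ?case using Suc by simp
qed

lemma abs_chi_bounded: "\<exists>M\<ge>1. \<forall>r\<ge>1. \<bar>chi r\<bar> \<le> M"
proof -
  have "continuous_on {1..2} (D 0)"
    by (intro continuous_at_imp_continuous_on ballI DERIV_isCont[OF jet_has_real_derivative]) auto
  then obtain B where B: "\<And>x. x \<in> {1..2} \<Longrightarrow> norm (D 0 x) \<le> B"
    using continuous_on_compact_bound[OF compact_Icc] by blast
  have "\<bar>chi r\<bar> \<le> max B 1" if "r \<ge> 1" for r
    using that B[of r] jet_0[of r] eq_1_ge_2[of r] by (cases "r \<le> 2") auto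
  then show ?thesis by (intro exI[of _ "max B 1"]) auto
qed

text \<open>Combinations of derivatives of \<open>\<chi>\<close> with coefficients polynomial in \<open>1/r\<close> are closed under
  \<open>G \<mapsto> G'\<close> and \<open>G \<mapsto> G/r\<close>, which is all that integrating by parts against \<open>J\<^sub>1(r\<eta>)\<close> produces.\<close>
definition jet_comb :: "nat \<Rightarrow> (nat \<Rightarrow> real poly) \<Rightarrow> real \<Rightarrow> real" where
  "jet_comb N ps r = (\<Sum>j<N. D j r * poly (ps j) (inverse r))"

definition jet_comb_deriv_coeffs :: "nat \<Rightarrow> (nat \<Rightarrow> real poly) \<Rightarrow> nat \<Rightarrow> real poly" where
  "jet_comb_deriv_coeffs N ps j =
     (case j of 0 \<Rightarrow> 0 | Suc i \<Rightarrow> ps i) - (if j < N then pCons 0 (pCons 0 (pderiv (ps j))) else 0)"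

lemma has_real_derivative_jet_comb:
  assumes "r > 0"
  shows "(jet_comb N ps has_real_derivative jet_comb (Suc N) (jet_comb_deriv_coeffs N ps) r) (at r)"
proof -
  let ?q = "\<lambda>j. pCons 0 (pCons 0 (pderiv (ps j)))"
  have "(jet_comb N ps has_real_derivative
      (\<Sum>j<N. D (Suc j) r * poly (ps j) (inverse r) + D j r * - poly (?q j) (inverse r))) (at r)"
    unfolding jet_comb_def[abs_def] using assms
    by (intro DERIV_sum DERIV_cong[OF DERIV_mult[OF jet_has_real_derivative has_real_derivative_poly_inverse]])
       auto
  moreover have "jet_comb (Suc N) (jet_comb_deriv_coeffs N ps) r
      = (\<Sum>j<N. D (Suc j) r * poly (ps j) (inverse r) + D j r * - poly (?q j) (inverse r))"
  proof -
    have "jet_comb (Suc N) (jet_comb_deriv_coeffs N ps) r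
        = (\<Sum>j<Suc N. D j r * poly (case j of 0 \<Rightarrow> 0 | Suc i \<Rightarrow> ps i) (inverse r))
          - (\<Sum>j<Suc N. D j r * (if j < N then poly (?q j) (inverse r) else 0))"
      unfolding jet_comb_def jet_comb_deriv_coeffs_def
      by (simp add: sum_subtractf algebra_simps if_distrib cong: if_cong)
    also have "(\<Sum>j<Suc N. D j r * poly (case j of 0 \<Rightarrow> 0 | Suc i \<Rightarrow> ps i) (inverse r))
        = (\<Sum>j<N. D (Suc j) r * poly (ps j) (inverse r))"
      by (subst sum.lessThan_Suc_shift) simp
    finally show ?thesis
      by (simp add: sum_subtractf sum.distrib)
  qed
  ultimately show ?thesis by simp
qed

lemma continuous_on_jet_comb: "continuous_on {0<..} (jet_comb N ps)"
  using has_real_derivative_jet_comb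
  by (intro continuous_at_imp_continuous_on ballI DERIV_isCont) auto

lemma jet_comb_below_1: "0 < r \<Longrightarrow> r < 1 \<Longrightarrow> jet_comb N ps r = 0"
  unfolding jet_comb_def using jet_below_1 by simp

lemma jet_comb_above_2: "r > 2 \<Longrightarrow> N > 0 \<Longrightarrow> jet_comb N ps r = poly (ps 0) (inverse r)"
  unfolding jet_comb_def using jet_above_2[of r]
  by (cases N) (simp_all add: sum.lessThan_Suc_shift del: sum.lessThan_Suc)

lemma decaying_jet_comb_deriv_coeffs: "decaying_coeffs (jet_comb_deriv_coeffs N ps)"
  by (simp add: decaying_coeffs_def jet_comb_deriv_coeffs_def)

lemma jet_comb_decay:
  assumes "decaying_coeffs ps"
  obtains C where "\<And>r. r \<ge> 1 \<Longrightarrow> \<bar>jet_comb N ps r\<bar> \<le> C / r ^ 2"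
proof -
  obtain q where q: "ps 0 = pCons 0 (pCons 0 q)"
    using assms by (rule decaying_coeffsE)
  have "continuous_on {1..2} (jet_comb N ps)"
    by (rule continuous_on_subset[OF continuous_on_jet_comb]) auto
  then have "continuous_on {1..2} (\<lambda>r. r ^ 2 * jet_comb N ps r)"
    by (intro continuous_intros)
  then obtain B1 where B1: "\<And>r. r \<in> {1..2} \<Longrightarrow> norm (r ^ 2 * jet_comb N ps r) \<le> B1"
    using continuous_on_compact_bound[OF compact_Icc] by blast
  have "continuous_on {0..1} (poly q)"
    by (rule continuous_on_poly[OF continuous_on_id, unfolded id_def])
  then obtain B2 where B2: "B2 \<ge> 0" "\<And>y. y \<in> {0..1} \<Longrightarrow> norm (poly q y) \<le> B2"
    using continuous_on_compact_bound[OF compact_Icc] by blast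
  have "\<bar>r ^ 2 * jet_comb N ps r\<bar> \<le> max B1 B2" if "r \<ge> 1" for r
  proof (cases "r \<le> 2")
    case True
    then show ?thesis using B1[of r] that by auto
  next
    case False
    have "\<bar>r ^ 2 * poly (ps 0) (inverse r)\<bar> = \<bar>poly q (inverse r)\<bar>"
      using that by (simp add: q power2_eq_square field_simps)
    also have "\<dots> \<le> B2"
      using that B2(2)[of "inverse r"] by (simp add: inverse_le_1_iff)
    finally show ?thesis
      using False B2(1) jet_comb_above_2[of r N ps] by (cases "N = 0") (auto simp: jet_comb_def)
  qed
  then show thesis
    by (intro that[of "max B1 B2"]) (simp add: abs_mult pos_le_divide_eq mult.commute)
qed

lemma jet_comb_tendsto_0:
  assumes "decaying_coeffs ps"
  shows "(jet_comb N ps \<longlongrightarrow> 0) at_top"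
proof -
  obtain C where C: "\<And>r. r \<ge> 1 \<Longrightarrow> \<bar>jet_comb N ps r\<bar> \<le> C / r ^ 2"
    using jet_comb_decay[OF assms, where N=N] by blast
  show ?thesis
  proof (rule Lim_null_comparison)
    show "\<forall>\<^sub>F r in at_top. norm (jet_comb N ps r) \<le> C / r ^ 2"
      using C by (auto simp: eventually_at_top_linorder)
    show "((\<lambda>r. C / r ^ 2) \<longlongrightarrow> 0) at_top"
      by real_asymp
  qed
qed

lemma set_integrable_mult_jet_comb:
  assumes "decaying_coeffs ps" "continuous_on {0<..} \<phi>" "\<And>r. r > 0 \<Longrightarrow> \<bar>\<phi> r\<bar> \<le> 1"
  shows "set_integrable lborel {0<..} (\<lambda>r. \<phi> r * jet_comb N ps r)"
proof -
  obtain C where C: "\<And>r. r \<ge> 1 \<Longrightarrow> \<bar>jet_comb N ps r\<bar> \<le> C / r ^ 2"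
    using jet_comb_decay[OF assms(1), where N=N] by blast
  show ?thesis
  proof (rule set_integrable_Ioi_0_if_decay)
    show "continuous_on {0<..} (\<lambda>r. \<phi> r * jet_comb N ps r)"
      by (intro continuous_intros assms(2) continuous_on_jet_comb)
    show "\<phi> r * jet_comb N ps r = 0" if "0 < r" "r < 1" for r
      using that jet_comb_below_1 by simp
    show "\<bar>\<phi> r * jet_comb N ps r\<bar> \<le> C / r ^ 2" if "r \<ge> 1" for r
      using C[OF that] assms(3)[of r] that
      by (simp add: abs_mult) (meson abs_ge_zero mult_left_le_one_le order_trans)
  qed
qed

lemma set_integrable_besselJ1_mult_jet_comb:
  assumes "decaying_coeffs ps" "\<eta> > 0"
  shows "set_integrable lborel {0<..} (\<lambda>r. besselJ1 (r * \<eta>) * jet_comb N ps r)"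
  using assms
  by (intro set_integrable_mult_jet_comb continuous_at_imp_continuous_on ballI abs_besselJ1_le_1
      continuous_at_compose[OF _ isCont_besselJ1, unfolded o_def] continuous_intros) auto

definition bessel_op_coeffs :: "nat \<Rightarrow> (nat \<Rightarrow> real poly) \<Rightarrow> nat \<Rightarrow> real poly" where
  "bessel_op_coeffs N ps j =
     jet_comb_deriv_coeffs (Suc N) (jet_comb_deriv_coeffs N ps) j
     - (if j < Suc N then pCons 0 (jet_comb_deriv_coeffs N ps j) else 0)"

lemma jet_comb_bessel_op_coeffs:
  assumes "r > 0"
  shows "jet_comb (Suc (Suc N)) (bessel_op_coeffs N ps) r
       = jet_comb (Suc (Suc N)) (jet_comb_deriv_coeffs (Suc N) (jet_comb_deriv_coeffs N ps)) r
         - jet_comb (Suc N) (jet_comb_deriv_coeffs N ps) r / r"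
proof -
  have "(\<Sum>j<Suc (Suc N). D j r * (if j < Suc N then inverse r * poly (jet_comb_deriv_coeffs N ps j) (inverse r) else 0))
      = inverse r * jet_comb (Suc N) (jet_comb_deriv_coeffs N ps) r"
    unfolding jet_comb_def by (subst sum.lessThan_Suc) (simp add: sum_distrib_left mult_ac distrib_left)
  then show ?thesis
    unfolding jet_comb_def[of _ "bessel_op_coeffs N ps"] bessel_op_coeffs_def
    by (simp add: sum_subtractf algebra_simps if_distrib jet_comb_def divide_inverse cong: if_cong)
qed

lemma decaying_bessel_op_coeffs: "decaying_coeffs (bessel_op_coeffs N ps)"
  using decaying_jet_comb_deriv_coeffs[of "Suc N" "jet_comb_deriv_coeffs N ps"]
    decaying_jet_comb_deriv_coeffs[of N ps]
  by (simp add: decaying_coeffs_def bessel_op_coeffs_def coeff_pCons)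

lemma integral_besselJ1_mult_jet_comb:
  assumes "decaying_coeffs ps" "\<eta> > 0"
  shows "(LBINT r:{0<..}. besselJ1 (r * \<eta>) * jet_comb N ps r)
       = - (1 / \<eta> ^ 2) * (LBINT r:{0<..}. besselJ1 (r * \<eta>) * jet_comb (Suc (Suc N)) (bessel_op_coeffs N ps) r)"
proof -
  let ?G1 = "jet_comb (Suc N) (jet_comb_deriv_coeffs N ps)"
  let ?G2 = "jet_comb (Suc (Suc N)) (jet_comb_deriv_coeffs (Suc N) (jet_comb_deriv_coeffs N ps))"
  have eq: "besselJ1 (r * \<eta>) * jet_comb (Suc (Suc N)) (bessel_op_coeffs N ps) r
      = besselJ1 (r * \<eta>) * (?G2 r - ?G1 r / r)" if "r \<in> {0<..}" for r
    using that by (simp add: jet_comb_bessel_op_coeffs)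
  have "(LBINT r:{0<..}. besselJ1 (r * \<eta>) * jet_comb (Suc (Suc N)) (bessel_op_coeffs N ps) r)
      = (LBINT r:{0<..}. besselJ1 (r * \<eta>) * (?G2 r - ?G1 r / r))"
    using eq by (intro set_lebesgue_integral_cong) auto
  moreover have "(LBINT r:{0<..}. besselJ1 (r * \<eta>) * jet_comb N ps r)
      = - (1 / \<eta> ^ 2) * (LBINT r:{0<..}. besselJ1 (r * \<eta>) * (?G2 r - ?G1 r / r))"
  proof (rule besselJ1_integral_by_parts)
    show "\<forall>\<^sub>F x in at_right 0. jet_comb N ps x = 0 \<and> ?G1 x = 0"
      unfolding eventually_at_right_field by (auto intro!: exI[of _ 1] simp: jet_comb_below_1)
    show "set_integrable lborel {0<..} (\<lambda>r. besselJ1 (r * \<eta>) * (?G2 r - ?G1 r / r))"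
      by (rule iffD1[OF set_integrable_cong[OF refl refl eq]])
         (simp_all add: set_integrable_besselJ1_mult_jet_comb decaying_bessel_op_coeffs \<open>\<eta> > 0\<close>)
  qed (use assms in \<open>auto intro: has_real_derivative_jet_comb continuous_on_jet_comb
         jet_comb_tendsto_0 decaying_jet_comb_deriv_coeffs set_integrable_besselJ1_mult_jet_comb\<close>)
  ultimately show ?thesis
    by simp
qed

text \<open>After \<open>m\<close> double integrations by parts, starting from \<open>\<chi>(r) r\<^sup>-\<^sup>4\<close> (the factor \<open>r\<close> of the
  Hankel transform included).\<close>
fun bessel_op_iter :: "nat \<Rightarrow> nat \<times> (nat \<Rightarrow> real poly)" where
  "bessel_op_iter 0 = (1, \<lambda>_. monom 1 4)"
| "bessel_op_iter (Suc m) =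
     (Suc (Suc (fst (bessel_op_iter m))), bessel_op_coeffs (fst (bessel_op_iter m)) (snd (bessel_op_iter m)))"

lemma decaying_bessel_op_iter: "decaying_coeffs (snd (bessel_op_iter m))"
  by (cases m) (simp_all add: decaying_bessel_op_coeffs decaying_coeffs_def[of "\<lambda>_. monom 1 4"])

lemma jet_comb_initial: "r > 0 \<Longrightarrow> jet_comb 1 (\<lambda>_. monom 1 4) r = chi r / r ^ 4"
  by (simp add: jet_comb_def jet_0 poly_monom field_simps)

lemma hankel1_eq_integral_jet_comb:
  "hankel1 (\<lambda>x. chi x / x ^ 5) \<eta> = (LBINT r:{0<..}. besselJ1 (r * \<eta>) * jet_comb 1 (\<lambda>_. monom 1 4) r)"
proof -
  have "besselJ1 (r * \<eta>) * (chi r / r ^ 5) * r = besselJ1 (r * \<eta>) * jet_comb 1 (\<lambda>_. monom 1 4) r"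
    if "r > 0" for r
    using that by (subst jet_comb_initial) (simp_all add: eval_nat_numeral field_simps)
  then show ?thesis
    unfolding hankel1_def by (intro set_lebesgue_integral_cong) auto
qed

lemma hankel1_eq_bessel_op_iter:
  assumes "\<eta> > 0"
  shows "hankel1 (\<lambda>x. chi x / x ^ 5) \<eta> = (- 1 / \<eta> ^ 2) ^ m *
     (LBINT r:{0<..}. besselJ1 (r * \<eta>) * jet_comb (fst (bessel_op_iter m)) (snd (bessel_op_iter m)) r)"
proof (induction m)
  case 0
  then show ?case by (simp add: hankel1_eq_integral_jet_comb)
next
  case (Suc m)
  let ?I = "\<lambda>m. LBINT r:{0<..}. besselJ1 (r * \<eta>) * jet_comb (fst (bessel_op_iter m)) (snd (bessel_op_iter m)) r"
  have "hankel1 (\<lambda>x. chi x / x ^ 5) \<eta> = (- 1 / \<eta> ^ 2) ^ m * (- (1 / \<eta> ^ 2) * ?I (Suc m))"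
    using Suc integral_besselJ1_mult_jet_comb[OF decaying_bessel_op_iter[of m] assms,
        where N="fst (bessel_op_iter m)"] by simp
  also have "\<dots> = (- 1 / \<eta> ^ 2) ^ Suc m * ?I (Suc m)"
    by (simp only: power_Suc minus_divide_left mult.assoc mult.left_commute)
  finally show ?case .
qed

lemma hankel1_decay_power:
  obtains C where "\<And>\<eta>. \<eta> > 0 \<Longrightarrow> \<bar>hankel1 (\<lambda>x. chi x / x ^ 5) \<eta>\<bar> \<le> C * (1 / \<eta> ^ 2) ^ m"
proof -
  let ?G = "jet_comb (fst (bessel_op_iter m)) (snd (bessel_op_iter m))"
  have int_G: "set_integrable lborel {0<..} (\<lambda>r. \<bar>?G r\<bar>)"
    using set_integrable_mult_jet_comb[OF decaying_bessel_op_iter, of "\<lambda>_. 1"]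
    by (simp add: set_integrable_abs)
  have "\<bar>hankel1 (\<lambda>x. chi x / x ^ 5) \<eta>\<bar> \<le> (LBINT r:{0<..}. \<bar>?G r\<bar>) * (1 / \<eta> ^ 2) ^ m"
    if "\<eta> > 0" for \<eta>
  proof -
    have int: "set_integrable lborel {0<..} (\<lambda>r. besselJ1 (r * \<eta>) * ?G r)"
      using set_integrable_besselJ1_mult_jet_comb[OF decaying_bessel_op_iter that] .
    have "\<bar>LBINT r:{0<..}. besselJ1 (r * \<eta>) * ?G r\<bar> \<le> (LBINT r:{0<..}. \<bar>besselJ1 (r * \<eta>) * ?G r\<bar>)"
      using set_integral_norm_bound[OF int] by simp
    also have "\<dots> \<le> (LBINT r:{0<..}. \<bar>?G r\<bar>)"
      using that abs_besselJ1_le_1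
      by (intro set_integral_mono set_integrable_abs int int_G)
         (simp add: abs_mult mult_left_le_one_le)
    finally show ?thesis
      unfolding hankel1_eq_bessel_op_iter[OF that, of m]
      by (simp add: abs_mult power_abs mult.commute mult_left_mono)
  qed
  then show thesis by (rule that)
qed

lemma hankel1_decay_powr:
  assumes "k \<ge> 0"
  shows "\<exists>Ck>0. \<forall>\<eta>\<ge>1. \<bar>hankel1 (\<lambda>x. chi x / x ^ 5) \<eta>\<bar> \<le> Ck / \<eta> powr k"
proof -
  define m where "m = nat \<lceil>k\<rceil>"
  have "k \<le> real m"
    unfolding m_def by linarith
  obtain C where C: "\<And>\<eta>. \<eta> > 0 \<Longrightarrow> \<bar>hankel1 (\<lambda>x. chi x / x ^ 5) \<eta>\<bar> \<le> C * (1 / \<eta> ^ 2) ^ m"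
    using hankel1_decay_power[where m=m] by blast
  have "\<bar>hankel1 (\<lambda>x. chi x / x ^ 5) \<eta>\<bar> \<le> (\<bar>C\<bar> + 1) / \<eta> powr k" if "\<eta> \<ge> 1" for \<eta>
  proof -
    have "(1 / \<eta> ^ 2) ^ m = 1 / \<eta> powr real (2 * m)"
      using that by (subst powr_realpow) (auto simp: power_mult power_one_over)
    also have "\<dots> \<le> 1 / \<eta> powr k"
      using that \<open>k \<le> real m\<close> by (intro divide_left_mono powr_mono) auto
    finally have power_le: "(1 / \<eta> ^ 2) ^ m \<le> 1 / \<eta> powr k" .
    have "\<bar>hankel1 (\<lambda>x. chi x / x ^ 5) \<eta>\<bar> \<le> C * (1 / \<eta> ^ 2) ^ m"
      using C[of \<eta>] that by simp
    also have "\<dots> \<le> \<bar>C\<bar> * (1 / \<eta> ^ 2) ^ m"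
      by (intro mult_right_mono) auto
    also have "\<dots> \<le> \<bar>C\<bar> * (1 / \<eta> powr k)"
      using power_le by (intro mult_left_mono) auto
    also have "\<dots> \<le> (\<bar>C\<bar> + 1) / \<eta> powr k"
      using that by (simp add: divide_right_mono)
    finally show ?thesis .
  qed
  then show ?thesis
    by (intro exI[of _ "\<bar>C\<bar> + 1"]) auto
qed

lemma hankel1_eq_integral_besselJ1_remainder:
  assumes int: "set_integrable lborel {0<..} (\<lambda>x. chi x / x ^ 3)"
    and zero: "(LBINT x:{0<..}. chi x / x ^ 3) = 0" and "\<eta> > 0"
  shows "set_integrable lborel {1<..} (\<lambda>r. (besselJ1 (r * \<eta>) - r * \<eta> / 2) * (chi r / r ^ 4))"
    and "hankel1 (\<lambda>x. chi x / x ^ 5) \<eta> = (LBINT r:{1<..}. (besselJ1 (r * \<eta>) - r * \<eta> / 2) * (chi r / r ^ 4))"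
proof -
  define E where "E r = (besselJ1 (r * \<eta>) - r * \<eta> / 2) * (chi r / r ^ 4)" for r
  have chi_div: "besselJ1 (r * \<eta>) * jet_comb 1 (\<lambda>_. monom 1 4) r = besselJ1 (r * \<eta>) * (chi r / r ^ 4)"
    if "r \<in> {0<..}" for r
    using that by (subst jet_comb_initial) simp_all
  have int_J: "set_integrable lborel {0<..} (\<lambda>r. besselJ1 (r * \<eta>) * (chi r / r ^ 4))"
    by (rule iffD1[OF set_integrable_cong[OF refl refl chi_div]])
       (use \<open>\<eta> > 0\<close> in \<open>simp_all add: set_integrable_besselJ1_mult_jet_comb decaying_coeffs_def\<close>)
  have lin: "r * \<eta> / 2 * (chi r / r ^ 4) = \<eta> / 2 * (chi r / r ^ 3)" if "r \<in> {0<..}" for r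
    using that by (simp add: eval_nat_numeral field_simps)
  have int_lin: "set_integrable lborel {0<..} (\<lambda>r. r * \<eta> / 2 * (chi r / r ^ 4))"
    by (rule iffD2[OF set_integrable_cong[OF refl refl lin] set_integrable_mult_right[OF int]])
  have "(LBINT r:{0<..}. r * \<eta> / 2 * (chi r / r ^ 4)) = (LBINT r:{0<..}. \<eta> / 2 * (chi r / r ^ 3))"
    using lin by (intro set_lebesgue_integral_cong) auto
  also have "\<dots> = \<eta> / 2 * (LBINT r:{0<..}. chi r / r ^ 3)"
    by (rule set_integral_mult_right)
  finally have lin_zero: "(LBINT r:{0<..}. r * \<eta> / 2 * (chi r / r ^ 4)) = 0"
    using zero by simp
  have "(LBINT r:{0<..}. E r)
      = (LBINT r:{0<..}. besselJ1 (r * \<eta>) * (chi r / r ^ 4)) - (LBINT r:{0<..}. r * \<eta> / 2 * (chi r / r ^ 4))"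
    unfolding E_def left_diff_distrib by (rule set_integral_diff(2)[OF int_J int_lin])
  also have "\<dots> = (LBINT r:{0<..}. besselJ1 (r * \<eta>) * (chi r / r ^ 4))"
    using lin_zero by simp
  also have "\<dots> = hankel1 (\<lambda>x. chi x / x ^ 5) \<eta>"
    unfolding hankel1_def by (intro set_lebesgue_integral_cong) (auto simp: eval_nat_numeral field_simps)
  finally have "hankel1 (\<lambda>x. chi x / x ^ 5) \<eta> = (LBINT r:{0<..}. E r)" ..
  moreover have "E r = 0" if "r \<in> {0<..} - {1<..}" for r
    using that vanishes_le_1[of r] by (simp add: E_def)
  moreover have "set_integrable lborel {0<..} E"
    unfolding E_def left_diff_distrib by (rule set_integral_diff(1)[OF int_J int_lin])
  ultimately show "set_integrable lborel {1<..} E" "hankel1 (\<lambda>x. chi x / x ^ 5) \<eta> = (LBINT r:{1<..}. E r)"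
    using set_integral_eq_on_subset[of "{1<..}" "{0<..}" E lborel] by auto
qed

lemma hankel1_small_eta_bound:
  assumes "set_integrable lborel {0<..} (\<lambda>x. chi x / x ^ 3)" and "(LBINT x:{0<..}. chi x / x ^ 3) = 0"
  shows "\<exists>C>0. \<forall>\<eta>. 0 < \<eta> \<and> \<eta> < 1 \<longrightarrow>
           \<bar>hankel1 (\<lambda>x. chi x / x ^ 5) \<eta>\<bar> \<le> C * \<eta> ^ 3 * jbr (ln \<eta>)"
proof -
  obtain M where M: "M \<ge> 1" "\<And>r. r \<ge> 1 \<Longrightarrow> \<bar>chi r\<bar> \<le> M"
    using abs_chi_bounded by blast
  define K where "K = (2 * exp 1 + 3) * M"
  have "K > 0"
    using M(1) by (simp add: K_def add_pos_pos)
  have "\<bar>hankel1 (\<lambda>x. chi x / x ^ 5) \<eta>\<bar> \<le> 2 * K * \<eta> ^ 3 * jbr (ln \<eta>)" if "0 < \<eta>" "\<eta> < 1" for \<eta>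
  proof -
    define E where "E r = (besselJ1 (r * \<eta>) - r * \<eta> / 2) * (chi r / r ^ 4)" for r
    define L where "L r = 1 / (r * (1 + (r * \<eta>) ^ 2))" for r
    note remainder = hankel1_eq_integral_besselJ1_remainder[OF assms \<open>0 < \<eta>\<close>, folded E_def]
    have "\<bar>hankel1 (\<lambda>x. chi x / x ^ 5) \<eta>\<bar> \<le> (LBINT r:{1<..}. \<bar>E r\<bar>)"
      using set_integral_norm_bound[OF remainder(1)] remainder(2) by simp
    also have "\<dots> \<le> (LBINT r:{1<..}. K * \<eta> ^ 3 * L r)"
    proof (rule set_integral_mono)
      show "set_integrable lborel {1<..} (\<lambda>r. \<bar>E r\<bar>)"
        using remainder(1) by (rule set_integrable_abs)
      show "set_integrable lborel {1<..} (\<lambda>r. K * \<eta> ^ 3 * L r)"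
        unfolding L_def using log_kernel_integral(1)[OF \<open>0 < \<eta>\<close>] by (rule set_integrable_mult_right)
      fix r :: real assume "r \<in> {1<..}"
      then have "\<bar>(besselJ1 (r * \<eta>) - r * \<eta> / 2) / r ^ 4\<bar> * \<bar>chi r\<bar> \<le> (2 * exp 1 + 3) * \<eta> ^ 3 * L r * M"
        using abs_besselJ1_sub_half_div_pow4_le[of r \<eta>] M(2)[of r] \<open>0 < \<eta>\<close>
        unfolding L_def by (intro mult_mono) auto
      then show "\<bar>E r\<bar> \<le> K * \<eta> ^ 3 * L r"
        by (simp add: E_def K_def abs_mult abs_divide mult_ac)
    qed
    also have "\<dots> = K * \<eta> ^ 3 * (- ln \<eta> + ln (1 + \<eta> ^ 2) / 2)"
      unfolding L_def set_integral_mult_right log_kernel_integral(2)[OF \<open>0 < \<eta>\<close>] ..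
    also have "\<dots> \<le> K * \<eta> ^ 3 * (2 * jbr (ln \<eta>))"
      using log_kernel_value_le_jbr[OF that] \<open>K > 0\<close> \<open>0 < \<eta>\<close> by (intro mult_left_mono) auto
    finally show ?thesis
      by (simp add: mult_ac)
  qed
  then show ?thesis
    using \<open>K > 0\<close> by (intro exI[of _ "2 * K"]) auto
qed

end

section \<open>The standard bump on \<open>(1,2)\<close>\<close>

definition bump_quad :: "real poly" where
  "bump_quad = [:-2, 3, -1:]"

lemma poly_bump_quad: "poly bump_quad x = (x - 1) * (2 - x)"
  by (simp add: bump_quad_def algebra_simps)

definition bump_frac :: "real poly \<Rightarrow> nat \<Rightarrow> real \<Rightarrow> real" where
  "bump_frac p k x =
     (if 1 < x \<and> x < 2 then poly p x * inverse (poly bump_quad x) ^ k * exp (- inverse (poly bump_quad x))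
      else 0)"

primrec bump_poly :: "nat \<Rightarrow> real poly" where
  "bump_poly 0 = 1"
| "bump_poly (Suc n) = pderiv (bump_poly n) * bump_quad ^ 2
     - smult (2 * real n) (bump_poly n * pderiv bump_quad * bump_quad) + bump_poly n * pderiv bump_quad"

text \<open>\<open>bump n\<close> is the \<open>n\<close>-th derivative of \<open>exp (-1 / ((x - 1) (2 - x)))\<close> on \<open>(1, 2)\<close>, extended by \<open>0\<close>.\<close>
definition bump :: "nat \<Rightarrow> real \<Rightarrow> real" where
  "bump n = bump_frac (bump_poly n) (2 * n)"

lemma bump_outside: "x \<le> 1 \<or> x \<ge> 2 \<Longrightarrow> bump n x = 0"
  by (auto simp: bump_def bump_frac_def)

lemma bump_0_nonneg: "bump 0 x \<ge> 0"
  by (simp add: bump_def bump_frac_def)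

lemma bump_0_pos: "bump 0 (3 / 2) > 0"
  by (simp add: bump_def bump_frac_def)

lemma tendsto_inverse_power_mult_exp_0:
  "((\<lambda>t. inverse t ^ k * exp (- inverse t)) \<longlongrightarrow> 0) (at_right (0::real))"
  by real_asymp

lemma bump_frac_tendsto_1: "(bump_frac p k \<longlongrightarrow> 0) (at 1)"
proof -
  have "filterlim (poly bump_quad) (at_right 0) (at_right 1)"
    unfolding poly_bump_quad by real_asymp
  then have "((\<lambda>x. poly p x * (inverse (poly bump_quad x) ^ k * exp (- inverse (poly bump_quad x))))
      \<longlongrightarrow> poly p 1 * 0) (at_right 1)"
    by (intro tendsto_mult tendsto_intros filterlim_compose[OF tendsto_inverse_power_mult_exp_0])
  moreover have "\<forall>\<^sub>F x in at_right 1.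
      poly p x * (inverse (poly bump_quad x) ^ k * exp (- inverse (poly bump_quad x))) = bump_frac p k x"
    unfolding eventually_at_right_field by (intro exI[of _ 2]) (auto simp: bump_frac_def)
  ultimately have "(bump_frac p k \<longlongrightarrow> 0) (at_right 1)"
    using tendsto_cong by force
  moreover have "(bump_frac p k \<longlongrightarrow> 0) (at_left 1)"
    by (rule tendsto_eventually)
       (auto simp: eventually_at_left_field bump_frac_def intro!: exI[of _ 0])
  ultimately show ?thesis
    by (simp add: filterlim_at_split)
qed

lemma bump_frac_tendsto_2: "(bump_frac p k \<longlongrightarrow> 0) (at 2)"
proof -
  have "filterlim (poly bump_quad) (at_right 0) (at_left 2)"
    unfolding poly_bump_quad by real_asymp
  then have "((\<lambda>x. poly p x * (inverse (poly bump_quad x) ^ k * exp (- inverse (poly bump_quad x))))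
      \<longlongrightarrow> poly p 2 * 0) (at_left 2)"
    by (intro tendsto_mult tendsto_intros filterlim_compose[OF tendsto_inverse_power_mult_exp_0])
  moreover have "\<forall>\<^sub>F x in at_left 2.
      poly p x * (inverse (poly bump_quad x) ^ k * exp (- inverse (poly bump_quad x))) = bump_frac p k x"
    unfolding eventually_at_left_field by (intro exI[of _ 1]) (auto simp: bump_frac_def)
  ultimately have "(bump_frac p k \<longlongrightarrow> 0) (at_left 2)"
    using tendsto_cong by force
  moreover have "(bump_frac p k \<longlongrightarrow> 0) (at_right 2)"
    by (rule tendsto_eventually)
       (auto simp: eventually_at_right_field bump_frac_def intro!: exI[of _ 3])
  ultimately show ?thesis
    by (simp add: filterlim_at_split)
qed

lemma bump_div_sub_1:
  assumes "y \<noteq> 1"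
  shows "bump n y / (y - 1) = bump_frac (bump_poly n * [:2, -1:]) (2 * n + 1) y"
proof (cases "1 < y \<and> y < 2")
  case True
  then have "inverse (poly bump_quad y) * (2 - y) = 1 / (y - 1)"
    by (simp add: poly_bump_quad inverse_mult_distrib divide_inverse)
  moreover have "bump_frac (bump_poly n * [:2, -1:]) (2 * n + 1) y
      = bump n y * (inverse (poly bump_quad y) * (2 - y))"
    using True by (simp add: bump_def bump_frac_def mult_ac power_add algebra_simps)
  ultimately show ?thesis
    by simp
qed (use assms in \<open>auto simp: bump_def bump_frac_def\<close>)

lemma bump_div_sub_2:
  assumes "y \<noteq> 2"
  shows "bump n y / (y - 2) = bump_frac (bump_poly n * [:1, -1:]) (2 * n + 1) y"
proof (cases "1 < y \<and> y < 2")
  case True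
  then have "inverse (poly bump_quad y) * (1 - y) = 1 / (y - 2)"
    unfolding poly_bump_quad by (simp add: divide_simps) (simp add: algebra_simps)
  moreover have "bump_frac (bump_poly n * [:1, -1:]) (2 * n + 1) y
      = bump n y * (inverse (poly bump_quad y) * (1 - y))"
    using True by (simp add: bump_def bump_frac_def mult_ac power_add algebra_simps)
  ultimately show ?thesis
    by simp
qed (use assms in \<open>auto simp: bump_def bump_frac_def\<close>)

lemma has_real_derivative_bump_frac:
  assumes "1 < x" "x < 2"
  shows "(bump_frac p k has_real_derivative
           bump_frac (pderiv p * bump_quad ^ 2 - smult (real k) (p * pderiv bump_quad * bump_quad)
             + p * pderiv bump_quad) (k + 2) x) (at x)"
proof -
  let ?u = "\<lambda>y. inverse (poly bump_quad y)" and ?g' = "poly (pderiv bump_quad) x"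
  have q: "poly bump_quad x \<noteq> 0"
    using assms by (simp add: poly_bump_quad)
  have du: "(?u has_real_derivative - (?u x * ?g' * ?u x)) (at x)"
    by (rule DERIV_inverse'[OF poly_DERIV q])
  have du_power: "((\<lambda>y. ?u y ^ k) has_real_derivative real k * ?u x ^ (k - 1) * - (?u x * ?g' * ?u x)) (at x)"
    using DERIV_power[OF du, of k] by (simp add: mult_ac)
  have deriv: "((\<lambda>y. poly p y * ?u y ^ k * exp (- ?u y)) has_real_derivative
      (poly (pderiv p) x * ?u x ^ k + real k * ?u x ^ (k - 1) * - (?u x * ?g' * ?u x) * poly p x) * exp (- ?u x)
      + exp (- ?u x) * - (- (?u x * ?g' * ?u x)) * (poly p x * ?u x ^ k)) (at x)"
    by (intro DERIV_mult du_power du poly_DERIV DERIV_chain2[OF DERIV_exp] DERIV_minus)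
  have key: "(d * w + c * v * - (u * g' * u) * P) * e + e * - (- (u * g' * u)) * (P * w)
      = (d * g ^ 2 - c * (P * g' * g) + P * g') * (w * u * u) * e"
    if "g * u = 1" "c * v * u = c * w" for d w c v u g' P e g :: real
  proof -
    have "(d * g ^ 2 - c * (P * g' * g) + P * g') * (w * u * u) * e
        = d * w * e * (g * u) ^ 2 - c * w * u * P * g' * e * (g * u) + P * g' * w * u * u * e"
      by (simp add: algebra_simps power2_eq_square)
    also have "\<dots> = d * w * e - (c * w) * u * P * g' * e + P * g' * w * u * u * e"
      using that(1) by simp
    also have "\<dots> = d * w * e - (c * v * u) * u * P * g' * e + P * g' * w * u * u * e"
      by (simp only: that(2))
    finally show ?thesis
      by (simp add: algebra_simps)
  qed
  have "real k * ?u x ^ (k - 1) * ?u x = real k * ?u x ^ k"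
    by (cases k) (auto simp: power_Suc2[symmetric] mult.assoc)
  then have "(poly (pderiv p) x * ?u x ^ k + real k * ?u x ^ (k - 1) * - (?u x * ?g' * ?u x) * poly p x) * exp (- ?u x)
      + exp (- ?u x) * - (- (?u x * ?g' * ?u x)) * (poly p x * ?u x ^ k)
      = (poly (pderiv p) x * poly bump_quad x ^ 2 - real k * (poly p x * ?g' * poly bump_quad x)
          + poly p x * ?g') * (?u x ^ k * ?u x * ?u x) * exp (- ?u x)"
    using q by (intro key) (auto simp: mult.assoc[symmetric])
  also have "\<dots> = bump_frac (pderiv p * bump_quad ^ 2 - smult (real k) (p * pderiv bump_quad * bump_quad)
      + p * pderiv bump_quad) (k + 2) x"
    using assms by (simp add: bump_frac_def poly_power mult_ac power_add power2_eq_square)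
  finally have deriv_eq: "(poly (pderiv p) x * ?u x ^ k + real k * ?u x ^ (k - 1) * - (?u x * ?g' * ?u x) * poly p x) * exp (- ?u x)
      + exp (- ?u x) * - (- (?u x * ?g' * ?u x)) * (poly p x * ?u x ^ k)
      = bump_frac (pderiv p * bump_quad ^ 2 - smult (real k) (p * pderiv bump_quad * bump_quad)
          + p * pderiv bump_quad) (k + 2) x" .
  have "poly p y * ?u y ^ k * exp (- ?u y) = bump_frac p k y" if "y \<in> {1<..<2}" for y
    using that by (simp add: bump_frac_def)
  from has_field_derivative_transform_within_open[OF deriv[unfolded deriv_eq] open_greaterThanLessThan _ this]
  show ?thesis
    using assms by simp
qed

lemma has_real_derivative_bump: "(bump n has_real_derivative bump (Suc n) x) (at x)"
proof -
  consider "x < 1 \<or> x > 2" | "x = 1" | "1 < x \<and> x < 2" | "x = 2"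
    by linarith
  then show ?thesis
  proof cases
    case 1
    have "(bump n has_real_derivative 0) (at x)"
      by (rule has_field_derivative_transform_within_open[where f="\<lambda>_. 0" and S="{..<1} \<union> {2<..}"])
         (use 1 in \<open>auto simp: bump_outside\<close>)
    then show ?thesis
      using 1 bump_outside[of x "Suc n"] by auto
  next
    case 2
    have "\<forall>\<^sub>F y in at 1. bump_frac (bump_poly n * [:2, -1:]) (2 * n + 1) y = (bump n y - bump n 1) / (y - 1)"
      by (auto simp: eventually_at_filter bump_div_sub_1 bump_outside)
    then have "((\<lambda>y. (bump n y - bump n 1) / (y - 1)) \<longlongrightarrow> 0) (at 1)"
      by (rule tendsto_cong[THEN iffD1, OF _ bump_frac_tendsto_1])
    then show ?thesis
      using 2 by (simp add: has_field_derivative_iff bump_outside)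
  next
    case 3
    then show ?thesis
      using has_real_derivative_bump_frac[of x "bump_poly n" "2 * n"] by (simp add: bump_def)
  next
    case 4
    have "\<forall>\<^sub>F y in at 2. bump_frac (bump_poly n * [:1, -1:]) (2 * n + 1) y = (bump n y - bump n 2) / (y - 2)"
      by (auto simp: eventually_at_filter bump_div_sub_2 bump_outside)
    then have "((\<lambda>y. (bump n y - bump n 2) / (y - 2)) \<longlongrightarrow> 0) (at 2)"
      by (rule tendsto_cong[THEN iffD1, OF _ bump_frac_tendsto_2])
    then show ?thesis
      using 4 by (simp add: has_field_derivative_iff bump_outside)
  qed
qed

lemma continuous_on_bump: "continuous_on S (bump n)"
  using has_real_derivative_bump by (intro continuous_at_imp_continuous_on ballI DERIV_isCont) blast

section \<open>A cutoff with vanishing moments\<close>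

lemma smooth_nonnegI:
  assumes "\<And>n x. x \<ge> 0 \<Longrightarrow> (D n has_real_derivative D (Suc n) x) (at x within {0..})"
    and "\<And>x. x \<ge> 0 \<Longrightarrow> D 0 x = f x"
  shows "smooth_nonneg f"
  using assms unfolding smooth_nonneg_def by blast

lemma smooth_nonneg_add:
  assumes "smooth_nonneg f" "smooth_nonneg g"
  shows "smooth_nonneg (\<lambda>x. f x + g x)"
proof -
  obtain Df Dg where
    "\<And>n x. x \<ge> 0 \<Longrightarrow> (Df n has_real_derivative Df (Suc n) x) (at x within {0..})" "\<And>x. x \<ge> 0 \<Longrightarrow> Df 0 x = f x"
    "\<And>n x. x \<ge> 0 \<Longrightarrow> (Dg n has_real_derivative Dg (Suc n) x) (at x within {0..})" "\<And>x. x \<ge> 0 \<Longrightarrow> Dg 0 x = g x"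
    using assms unfolding smooth_nonneg_def by metis
  then show ?thesis
    by (intro smooth_nonnegI[where D="\<lambda>n x. Df n x + Dg n x"] DERIV_add) auto
qed

lemma smooth_nonneg_cmult:
  assumes "smooth_nonneg f"
  shows "smooth_nonneg (\<lambda>x. c * f x)"
proof -
  obtain D where
    "\<And>n x. x \<ge> 0 \<Longrightarrow> (D n has_real_derivative D (Suc n) x) (at x within {0..})" "\<And>x. x \<ge> 0 \<Longrightarrow> D 0 x = f x"
    using assms unfolding smooth_nonneg_def by blast
  then show ?thesis
    by (intro smooth_nonnegI[where D="\<lambda>n x. c * D n x"] DERIV_cmult) auto
qed

text \<open>Leibniz: the \<open>n\<close>-th derivative of \<open>x f(x)\<close> is \<open>x f\<^sup>(\<^sup>n\<^sup>)(x) + n f\<^sup>(\<^sup>n\<^sup>-\<^sup>1\<^sup>)(x)\<close>.\<close>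
lemma smooth_nonneg_mult_id:
  assumes "smooth_nonneg f"
  shows "smooth_nonneg (\<lambda>x. x * f x)"
proof -
  obtain D where D:
    "\<And>n x. x \<ge> 0 \<Longrightarrow> (D n has_real_derivative D (Suc n) x) (at x within {0..})" "\<And>x. x \<ge> 0 \<Longrightarrow> D 0 x = f x"
    using assms unfolding smooth_nonneg_def by blast
  show ?thesis
  proof (rule smooth_nonnegI[where D="\<lambda>n x. x * D n x + real n * D (n - 1) x"])
    fix n and x :: real assume "x \<ge> 0"
    then have "((\<lambda>x. x * D n x + real n * D (n - 1) x) has_real_derivative
        (1 * D n x + D (Suc n) x * x) + real n * D (Suc (n - 1)) x) (at x within {0..})"
      by (intro DERIV_add DERIV_mult DERIV_ident DERIV_cmult D(1))
    then show "((\<lambda>x. x * D n x + real n * D (n - 1) x) has_real_derivative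
        x * D (Suc n) x + real (Suc n) * D (Suc n - 1) x) (at x within {0..})"
      by (cases n) (simp_all add: algebra_simps)
  qed (simp add: D(2))
qed

lemma smooth_nonneg_primitive:
  assumes "\<And>x. x \<ge> 0 \<Longrightarrow> (f has_real_derivative g x) (at x within {0..})" and "smooth_nonneg g"
  shows "smooth_nonneg f"
proof -
  obtain D where D:
    "\<And>n x. x \<ge> 0 \<Longrightarrow> (D n has_real_derivative D (Suc n) x) (at x within {0..})" "\<And>x. x \<ge> 0 \<Longrightarrow> D 0 x = g x"
    using assms(2) unfolding smooth_nonneg_def by blast
  show ?thesis
    by (rule smooth_nonnegI[where D="\<lambda>n. case n of 0 \<Rightarrow> f | Suc m \<Rightarrow> D m"])
       (auto simp: D assms(1) split: nat.split)
qed

lemma smooth_nonneg_bump: "smooth_nonneg (bump n)"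
  by (rule smooth_nonnegI[where D="\<lambda>k. bump (n + k)"])
     (auto intro: has_field_derivative_at_within has_real_derivative_bump)

definition bump_mass :: real where
  "bump_mass = (LBINT t:{0..2}. bump 0 t)"

definition bump_step :: "real \<Rightarrow> real" where
  "bump_step x = (LBINT t=ereal 0..x. bump 0 t) / bump_mass"

lemma bump_mass_pos: "bump_mass > 0"
  unfolding bump_mass_def
  by (rule set_integral_pos_Icc[of 0 2 _ "3 / 2"]) (auto simp: continuous_on_bump bump_0_nonneg bump_0_pos)

lemma has_real_derivative_bump_step:
  assumes "x \<ge> 0"
  shows "(bump_step has_real_derivative bump 0 x / bump_mass) (at x)"
proof -
  have "((\<lambda>u. LBINT t=ereal 0..u. bump 0 t) has_vector_derivative bump 0 x) (at x within {-1..x+1})"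
    using assms by (intro interval_integral_FTC2) (auto simp: continuous_on_bump)
  moreover have "at x within {-1..x+1} = at x"
    by (rule at_within_interior) (use assms in simp)
  ultimately show ?thesis
    unfolding bump_step_def[abs_def]
    by (intro DERIV_cdivide) (simp add: has_real_derivative_iff_has_vector_derivative)
qed

lemma bump_step_eq_0:
  assumes "0 \<le> x" "x \<le> 1"
  shows "bump_step x = 0"
proof -
  have "(LBINT t=ereal 0..x. bump 0 t) = (LBINT t:{0..x}. bump 0 t)"
    using assms by (simp add: interval_integral_Icc)
  also have "\<dots> = (LBINT t:{0..x}. 0)"
    using assms by (intro set_lebesgue_integral_cong) (auto simp: bump_outside)
  finally show ?thesis
    by (simp add: bump_step_def)
qed

lemma bump_step_eq_1:
  assumes "x \<ge> 2"
  shows "bump_step x = 1"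
proof -
  have "(LBINT t=ereal 0..x. bump 0 t) = (LBINT t:{0..x}. bump 0 t)"
    using assms by (simp add: interval_integral_Icc)
  also have "\<dots> = bump_mass"
    unfolding bump_mass_def using assms by (intro set_integral_eq_on_subset(1)) (auto simp: bump_outside)
  finally show ?thesis
    using bump_mass_pos by (simp add: bump_step_def)
qed

lemma smooth_nonneg_bump_step: "smooth_nonneg bump_step"
  by (rule smooth_nonneg_primitive[OF has_field_derivative_at_within[OF has_real_derivative_bump_step]])
     (auto intro: smooth_nonneg_cmult[of _ "inverse bump_mass"] smooth_nonneg_bump simp: divide_inverse mult.commute)

lemma continuous_on_bump_step: "continuous_on {0<..} bump_step"
  by (intro continuous_at_imp_continuous_on ballI DERIV_isCont[OF has_real_derivative_bump_step]) auto

lemma abs_bump_step_bounded: "\<exists>M. \<forall>x\<ge>0. \<bar>bump_step x\<bar> \<le> M"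
proof -
  have "continuous_on {0..2} bump_step"
    by (intro continuous_at_imp_continuous_on ballI DERIV_isCont[OF has_real_derivative_bump_step]) auto
  then obtain B where B: "\<And>x. x \<in> {0..2} \<Longrightarrow> norm (bump_step x) \<le> B"
    using continuous_on_compact_bound[OF compact_Icc] by blast
  have "\<bar>bump_step x\<bar> \<le> max B 1" if "x \<ge> 0" for x
    using that B[of x] bump_step_eq_1[of x] by (cases "x \<le> 2") auto
  then show ?thesis by blast
qed

definition euler4 :: "(real \<Rightarrow> real) \<Rightarrow> (real \<Rightarrow> real) \<Rightarrow> real \<Rightarrow> real" where
  "euler4 U U' x = x * U' x + 4 * U x"

context
  fixes U U' :: "real \<Rightarrow> real"
  assumes U: "\<And>x. (U has_real_derivative U' x) (at x)" and U': "continuous_on {1..2} U'"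
    and U_1: "U 1 = 0" and U_2: "U 2 = 0"
begin

lemma integral_euler4_mult:
  assumes w: "\<And>x. x \<in> {1..2} \<Longrightarrow> (w has_real_derivative w' x) (at x)" and w': "continuous_on {1..2} w'"
  shows "(LBINT x:{1..2}. euler4 U U' x * w x) = (LBINT x:{1..2}. U x * (3 * w x - x * w' x))"
proof -
  have cont_U: "continuous_on {1..2} U"
    using U by (intro continuous_at_imp_continuous_on ballI DERIV_isCont) blast
  have cont_w: "continuous_on {1..2} w"
    using w by (intro continuous_at_imp_continuous_on ballI DERIV_isCont) blast
  define f where "f x = euler4 U U' x * w x - U x * (3 * w x - x * w' x)" for x
  have "(LBINT x=ereal 1..ereal 2. f x) = (\<lambda>x. x * U x * w x) 2 - (\<lambda>x. x * U x * w x) 1"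
  proof (rule interval_integral_FTC_finite)
    show "continuous_on {min 1 2..max 1 2} f"
      unfolding f_def euler4_def using cont_U cont_w U' w' by (auto intro!: continuous_intros)
    fix x :: real assume "min 1 2 \<le> x" "x \<le> max 1 2"
    then have "((\<lambda>x. x * U x * w x) has_real_derivative f x) (at x)"
      unfolding f_def euler4_def
      by (auto intro!: derivative_eq_intros U w simp: algebra_simps)
    then show "((\<lambda>x. x * U x * w x) has_vector_derivative f x) (at x within {min 1 2..max 1 2})"
      by (simp add: has_real_derivative_iff_has_vector_derivative[symmetric] has_field_derivative_at_within)
  qed
  then have "(LBINT x:{1..2}. f x) = 0"
    by (simp add: interval_integral_Icc U_1 U_2)
  moreover have "(LBINT x:{1..2}. f x)
      = (LBINT x:{1..2}. euler4 U U' x * w x) - (LBINT x:{1..2}. U x * (3 * w x - x * w' x))"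
    unfolding f_def euler4_def using cont_U cont_w U' w'
    by (intro set_integral_diff(2) borel_integrable_atLeastAtMost') (auto intro!: continuous_intros)
  ultimately show ?thesis
    by simp
qed

lemma integral_euler4_mult_cube: "(LBINT x:{1..2}. euler4 U U' x * x ^ 3) = 0"
proof -
  have "(LBINT x:{1..2}. euler4 U U' x * x ^ 3) = (LBINT x:{1..2}. U x * (3 * x ^ 3 - x * (3 * x ^ 2)))"
    by (rule integral_euler4_mult) (auto intro!: derivative_eq_intros continuous_intros)
  also have "\<dots> = 0"
    by (simp add: power2_eq_square power3_eq_cube)
  finally show ?thesis .
qed

lemma integral_euler4_mult_cube_ln:
  "(LBINT x:{1..2}. euler4 U U' x * (x ^ 3 * ln x)) = - (LBINT x:{1..2}. U x * x ^ 3)"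
proof -
  have "(LBINT x:{1..2}. euler4 U U' x * (x ^ 3 * ln x))
      = (LBINT x:{1..2}. U x * (3 * (x ^ 3 * ln x) - x * (3 * x ^ 2 * ln x + x ^ 2)))"
    by (rule integral_euler4_mult)
       (auto intro!: derivative_eq_intros continuous_intros simp: power2_eq_square power3_eq_cube field_simps)
  also have "\<dots> = (LBINT x:{1..2}. (- 1) * (U x * x ^ 3))"
    by (intro set_lebesgue_integral_cong) (auto simp: power2_eq_square power3_eq_cube algebra_simps)
  also have "\<dots> = - (LBINT x:{1..2}. U x * x ^ 3)"
    by (subst set_integral_mult_right) simp
  finally show ?thesis .
qed

lemma integral_euler4_div_cube:
  "(LBINT x:{1..2}. euler4 U U' x * (1 / x ^ 3)) = 6 * (LBINT x:{1..2}. U x * (1 / x ^ 3))"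
proof -
  have "(LBINT x:{1..2}. euler4 U U' x * (1 / x ^ 3))
      = (LBINT x:{1..2}. U x * (3 * (1 / x ^ 3) - x * (- 3 / x ^ 4)))"
    by (rule integral_euler4_mult)
       (auto intro!: derivative_eq_intros continuous_intros simp: field_simps eval_nat_numeral)
  also have "\<dots> = (LBINT x:{1..2}. 6 * (U x * (1 / x ^ 3)))"
    by (intro set_lebesgue_integral_cong) (auto simp: field_simps eval_nat_numeral)
  also have "\<dots> = 6 * (LBINT x:{1..2}. U x * (1 / x ^ 3))"
    by (rule set_integral_mult_right)
  finally show ?thesis .
qed

end

definition bump_euler :: "real \<Rightarrow> real" where
  "bump_euler = euler4 (bump 0) (bump 1)"

definition bump_euler2 :: "real \<Rightarrow> real" where
  "bump_euler2 = euler4 bump_euler (\<lambda>x. 5 * bump 1 x + x * bump 2 x)"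

lemma has_real_derivative_bump_euler: "(bump_euler has_real_derivative 5 * bump 1 x + x * bump 2 x) (at x)"
proof -
  have "(bump_euler has_real_derivative (1 * bump 1 x + bump 2 x * x) + 4 * bump 1 x) (at x)"
    unfolding bump_euler_def euler4_def[abs_def]
    using has_real_derivative_bump[of 0 x] has_real_derivative_bump[of 1 x]
    by (intro DERIV_add DERIV_mult DERIV_ident DERIV_cmult) (simp_all add: numeral_2_eq_2)
  then show ?thesis
    by (simp add: algebra_simps)
qed

lemma bump_euler_outside: "x \<le> 1 \<or> x \<ge> 2 \<Longrightarrow> bump_euler x = 0"
  by (simp add: bump_euler_def euler4_def bump_outside)

lemma bump_euler2_outside: "x \<le> 1 \<or> x \<ge> 2 \<Longrightarrow> bump_euler2 x = 0"
  by (simp add: bump_euler2_def euler4_def bump_euler_outside bump_outside)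

lemma continuous_on_bump_euler: "continuous_on S bump_euler"
  unfolding bump_euler_def euler4_def by (intro continuous_intros continuous_on_bump)

lemma continuous_on_bump_euler2: "continuous_on S bump_euler2"
  unfolding bump_euler2_def euler4_def
  by (intro continuous_intros continuous_on_bump continuous_on_bump_euler)

lemma smooth_nonneg_bump_euler: "smooth_nonneg bump_euler"
  unfolding bump_euler_def euler4_def
  by (intro smooth_nonneg_add smooth_nonneg_cmult smooth_nonneg_mult_id smooth_nonneg_bump)

lemma smooth_nonneg_bump_euler2: "smooth_nonneg bump_euler2"
  unfolding bump_euler2_def euler4_def
  by (intro smooth_nonneg_add smooth_nonneg_cmult smooth_nonneg_mult_id smooth_nonneg_bump
      smooth_nonneg_bump_euler)

lemma bump_euler_moments:
  "(LBINT x:{1..2}. bump_euler x * x ^ 3) = 0"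
  "(LBINT x:{1..2}. bump_euler x * (x ^ 3 * ln x)) = - (LBINT x:{1..2}. bump 0 x * x ^ 3)"
  "(LBINT x:{1..2}. bump_euler x * (1 / x ^ 3)) = 6 * (LBINT x:{1..2}. bump 0 x * (1 / x ^ 3))"
  unfolding bump_euler_def
  by (intro integral_euler4_mult_cube integral_euler4_mult_cube_ln integral_euler4_div_cube
      has_real_derivative_bump continuous_on_bump bump_outside; simp)+

lemma bump_euler2_moments:
  "(LBINT x:{1..2}. bump_euler2 x * x ^ 3) = 0"
  "(LBINT x:{1..2}. bump_euler2 x * (x ^ 3 * ln x)) = 0"
  "(LBINT x:{1..2}. bump_euler2 x * (1 / x ^ 3)) = 36 * (LBINT x:{1..2}. bump 0 x * (1 / x ^ 3))"
proof -
  note euler = integral_euler4_mult_cube integral_euler4_mult_cube_ln integral_euler4_div_cube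
  note assms = has_real_derivative_bump_euler continuous_on_bump bump_euler_outside
  show "(LBINT x:{1..2}. bump_euler2 x * x ^ 3) = 0"
    unfolding bump_euler2_def by (rule euler(1)[OF assms(1)]) (auto intro!: assms continuous_intros)
  have "(LBINT x:{1..2}. bump_euler2 x * (x ^ 3 * ln x)) = - (LBINT x:{1..2}. bump_euler x * x ^ 3)"
    unfolding bump_euler2_def by (rule euler(2)[OF assms(1)]) (auto intro!: assms continuous_intros)
  then show "(LBINT x:{1..2}. bump_euler2 x * (x ^ 3 * ln x)) = 0"
    by (simp add: bump_euler_moments(1))
  have "(LBINT x:{1..2}. bump_euler2 x * (1 / x ^ 3)) = 6 * (LBINT x:{1..2}. bump_euler x * (1 / x ^ 3))"
    unfolding bump_euler2_def by (rule euler(3)[OF assms(1)]) (auto intro!: assms continuous_intros)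
  then show "(LBINT x:{1..2}. bump_euler2 x * (1 / x ^ 3)) = 36 * (LBINT x:{1..2}. bump 0 x * (1 / x ^ 3))"
    using bump_euler_moments(3) by simp
qed

definition correction :: "real \<Rightarrow> real \<Rightarrow> real \<Rightarrow> real \<Rightarrow> real" where
  "correction a b c x = a * bump_euler2 x + b * bump 0 x + c * bump_euler x"

lemma correction_moment:
  assumes "continuous_on {1..2} w"
  shows "set_integrable lborel {0<..} (\<lambda>x. correction a b c x * w x)"
    and "(LBINT x:{0<..}. correction a b c x * w x)
         = a * (LBINT x:{1..2}. bump_euler2 x * w x) + b * (LBINT x:{1..2}. bump 0 x * w x)
           + c * (LBINT x:{1..2}. bump_euler x * w x)"
proof -
  define h where "h x = a * (bump_euler2 x * w x) + b * (bump 0 x * w x) + c * (bump_euler x * w x)" for x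
  have h_eq: "(\<lambda>x. correction a b c x * w x) = h"
    by (simp add: correction_def h_def fun_eq_iff algebra_simps)
  have cont: "continuous_on {1..2} (\<lambda>x. bump_euler2 x * w x)" "continuous_on {1..2} (\<lambda>x. bump 0 x * w x)"
    "continuous_on {1..2} (\<lambda>x. bump_euler x * w x)"
    using assms by (auto intro!: continuous_intros continuous_on_bump continuous_on_bump_euler continuous_on_bump_euler2)
  note int = borel_integrable_atLeastAtMost'[OF cont(1)] borel_integrable_atLeastAtMost'[OF cont(2)]
    borel_integrable_atLeastAtMost'[OF cont(3)]
  have cont_h: "continuous_on {1..2} h"
    unfolding h_def by (intro continuous_on_add continuous_on_mult_left cont)
  have zero_h: "h x = 0" if "x > 0" "x < 1 \<or> x > 2" for x
    using that by (auto simp: h_def bump_outside bump_euler_outside bump_euler2_outside)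
  note support = set_integral_Ioi_0_eq_Icc_1_2[OF cont_h zero_h]
  show "set_integrable lborel {0<..} (\<lambda>x. correction a b c x * w x)"
    unfolding h_eq by (rule support(1))
  have "(LBINT x:{1..2}. h x) = a * (LBINT x:{1..2}. bump_euler2 x * w x) + b * (LBINT x:{1..2}. bump 0 x * w x)
      + c * (LBINT x:{1..2}. bump_euler x * w x)"
    unfolding h_def using int by (simp add: set_integral_add set_integrable_mult_right)
  then show "(LBINT x:{0<..}. correction a b c x * w x)
         = a * (LBINT x:{1..2}. bump_euler2 x * w x) + b * (LBINT x:{1..2}. bump 0 x * w x)
           + c * (LBINT x:{1..2}. bump_euler x * w x)"
    unfolding h_eq using support(2) by simp
qed

lemma correction_outside: "x \<le> 1 \<or> x \<ge> 2 \<Longrightarrow> correction a b c x = 0"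
  by (simp add: correction_def bump_outside bump_euler_outside bump_euler2_outside)

lemma smooth_nonneg_correction: "smooth_nonneg (correction a b c)"
  unfolding correction_def
  by (intro smooth_nonneg_add smooth_nonneg_cmult smooth_nonneg_bump smooth_nonneg_bump_euler
      smooth_nonneg_bump_euler2)

lemma abs_cube_mult_ln_le:
  assumes "0 < x" "x < 2"
  shows "\<bar>x ^ 3 * ln x\<bar> \<le> (8::real)"
proof (cases "x < 1")
  case True
  have "- ln x = ln (1 / x)"
    using assms by (simp add: ln_div)
  also have "\<dots> \<le> 1 / x"
    using assms ln_le_minus_one[of "1 / x"] by simp
  finally have "x ^ 3 * (- ln x) \<le> x ^ 3 * (1 / x)"
    using assms by (intro mult_left_mono) auto
  also have "\<dots> = x ^ 2"
    using assms by (simp add: power2_eq_square power3_eq_cube)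
  also have "\<dots> \<le> 8"
    using True assms power_le_one[of x 2] by linarith
  finally show ?thesis
    using True assms by (simp add: abs_mult abs_of_nonpos)
next
  case False
  have "0 \<le> ln x" "ln x \<le> 1"
    using False assms ln_le_minus_one[of x] by auto
  moreover have "x ^ 3 \<le> 2 ^ 3"
    using assms by (intro power_mono) auto
  ultimately have "x ^ 3 * ln x \<le> 8 * 1"
    by (intro mult_mono) auto
  then show ?thesis
    using \<open>0 \<le> ln x\<close> assms by (simp add: abs_mult)
qed

lemma set_integrable_bump_step_moments:
  "set_integrable lborel {0<..} (\<lambda>x. bump_step x / x ^ 3)"
  "set_integrable lborel {0<..} (\<lambda>x. x ^ 3 * (1 - bump_step x))"
  "set_integrable lborel {0<..} (\<lambda>x. x ^ 3 * ln x * (1 - bump_step x))"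
proof -
  obtain M where M: "\<And>x. x \<ge> 0 \<Longrightarrow> \<bar>bump_step x\<bar> \<le> M"
    using abs_bump_step_bounded by blast
  have one_sub: "\<bar>1 - bump_step x\<bar> \<le> 1 + M" if "x \<ge> 0" for x
    using M[OF that] by linarith
  show "set_integrable lborel {0<..} (\<lambda>x. bump_step x / x ^ 3)"
  proof (rule set_integrable_Ioi_0_if_decay[where C=M])
    fix r :: real assume "r \<ge> 1"
    then have "\<bar>bump_step r\<bar> / r ^ 3 \<le> M / r ^ 3" "M / r ^ 3 \<le> M / r ^ 2"
      using M[of r] M[of 0] by (auto intro!: divide_right_mono divide_left_mono power_increasing)
    then show "\<bar>bump_step r / r ^ 3\<bar> \<le> M / r ^ 2"
      using \<open>r \<ge> 1\<close> by (simp add: abs_divide)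
  qed (auto intro!: continuous_intros continuous_on_bump_step simp: bump_step_eq_0)
  show "set_integrable lborel {0<..} (\<lambda>x. x ^ 3 * (1 - bump_step x))"
  proof (rule set_integrable_Ioi_0_if_bounded_support[where B="8 * (1 + M)"])
    fix x :: real assume "0 < x" "x < 2"
    then have "\<bar>x ^ 3\<bar> * \<bar>1 - bump_step x\<bar> \<le> 8 * (1 + M)"
      using one_sub[of x] power_mono[of x 2 3] by (intro mult_mono) auto
    then show "\<bar>x ^ 3 * (1 - bump_step x)\<bar> \<le> 8 * (1 + M)"
      by (simp add: abs_mult)
  qed (auto intro!: continuous_intros continuous_on_bump_step simp: bump_step_eq_1)
  show "set_integrable lborel {0<..} (\<lambda>x. x ^ 3 * ln x * (1 - bump_step x))"
  proof (rule set_integrable_Ioi_0_if_bounded_support[where B="8 * (1 + M)"])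
    fix x :: real assume "0 < x" "x < 2"
    then have "\<bar>x ^ 3 * ln x\<bar> * \<bar>1 - bump_step x\<bar> \<le> 8 * (1 + M)"
      using one_sub[of x] abs_cube_mult_ln_le[of x] by (intro mult_mono) auto
    then show "\<bar>x ^ 3 * ln x * (1 - bump_step x)\<bar> \<le> 8 * (1 + M)"
      by (simp add: abs_mult)
  qed (auto intro!: continuous_intros continuous_on_bump_step simp: bump_step_eq_1)
qed

lemma set_integral_eq_add_scaled:
  fixes f g h :: "'a \<Rightarrow> real"
  assumes "set_integrable M A g" "set_integrable M A h" "\<And>x. x \<in> A \<Longrightarrow> f x = g x + s * h x"
  shows "set_integrable M A f" and "(LINT x:A|M. f x) = (LINT x:A|M. g x) + s * (LINT x:A|M. h x)"
proof -
  have int: "set_integrable M A (\<lambda>x. g x + s * h x)"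
    using assms(1,2) by (intro set_integral_add(1) set_integrable_mult_right)
  moreover have "set_integrable M A f = set_integrable M A (\<lambda>x. g x + s * h x)"
    by (rule set_integrable_cong) (simp_all add: assms(3))
  ultimately show "set_integrable M A f"
    by simp
  have "(LINT x:A|M. f x) = (LINT x:A|M. g x + s * h x)"
    using assms(3) unfolding set_lebesgue_integral_def
    by (intro Bochner_Integration.integral_cong) (auto simp: indicator_def)
  also have "\<dots> = (LINT x:A|M. g x) + s * (LINT x:A|M. h x)"
    using assms(1) set_integrable_mult_right[OF assms(2)] by (simp add: set_integral_add(2))
  finally show "(LINT x:A|M. f x) = (LINT x:A|M. g x) + s * (LINT x:A|M. h x)" .
qed

definition bump_moment :: "(real \<Rightarrow> real) \<Rightarrow> real" where
  "bump_moment w = (LBINT x:{1..2}. bump 0 x * w x)"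

lemma bump_moment_pos:
  assumes "continuous_on {1..2} w" "\<And>x. x \<in> {1..2} \<Longrightarrow> w x > 0"
  shows "bump_moment w > 0"
  unfolding bump_moment_def using assms
  by (intro set_integral_pos_Icc[of 1 2 _ "3 / 2"])
     (auto intro!: continuous_intros continuous_on_bump mult_nonneg_nonneg mult_pos_pos
       assms(2)[THEN less_imp_le] bump_0_nonneg bump_0_pos)

lemma correction_moments:
  "(LBINT x:{0<..}. correction a b c x * (1 / x ^ 3)) = (36 * a + b + 6 * c) * bump_moment (\<lambda>x. 1 / x ^ 3)"
  "(LBINT x:{0<..}. correction a b c x * x ^ 3) = b * bump_moment (\<lambda>x. x ^ 3)"
  "(LBINT x:{0<..}. correction a b c x * (x ^ 3 * ln x))
     = b * bump_moment (\<lambda>x. x ^ 3 * ln x) - c * bump_moment (\<lambda>x. x ^ 3)"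
proof -
  have "continuous_on {1..2} (\<lambda>x::real. 1 / x ^ 3)" "continuous_on {1..2} (\<lambda>x::real. x ^ 3)"
    "continuous_on {1..2} (\<lambda>x::real. x ^ 3 * ln x)"
    by (auto intro!: continuous_intros)
  note moment = correction_moment(2)[OF this(1)] correction_moment(2)[OF this(2)] correction_moment(2)[OF this(3)]
  show "(LBINT x:{0<..}. correction a b c x * (1 / x ^ 3)) = (36 * a + b + 6 * c) * bump_moment (\<lambda>x. 1 / x ^ 3)"
    unfolding moment(1) bump_euler_moments(3) bump_euler2_moments(3) bump_moment_def by algebra
  show "(LBINT x:{0<..}. correction a b c x * x ^ 3) = b * bump_moment (\<lambda>x. x ^ 3)"
    unfolding moment(2) bump_euler_moments(1) bump_euler2_moments(1) bump_moment_def by simp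
  show "(LBINT x:{0<..}. correction a b c x * (x ^ 3 * ln x))
     = b * bump_moment (\<lambda>x. x ^ 3 * ln x) - c * bump_moment (\<lambda>x. x ^ 3)"
    unfolding moment(3) bump_euler_moments(2) bump_euler2_moments(2) bump_moment_def by simp
qed

lemma exists_good_cutoff: "\<exists>chi. good_cutoff chi"
proof -
  define \<alpha> where "\<alpha> = bump_moment (\<lambda>x. x ^ 3)"
  define \<beta> where "\<beta> = bump_moment (\<lambda>x. 1 / x ^ 3)"
  have "\<alpha> > 0" "\<beta> > 0"
    unfolding \<alpha>_def \<beta>_def by (auto intro!: bump_moment_pos continuous_intros)
  define b where "b = (LBINT x:{0<..}. x ^ 3 * (1 - bump_step x)) / \<alpha>"
  define c where "c = (b * bump_moment (\<lambda>x. x ^ 3 * ln x) - (LBINT x:{0<..}. x ^ 3 * ln x * (1 - bump_step x))) / \<alpha>"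
  define a where "a = - ((LBINT x:{0<..}. bump_step x / x ^ 3) / \<beta> + b + 6 * c) / 36"
  define chi where "chi x = bump_step x + correction a b c x" for x
  have "continuous_on {1..2} (\<lambda>x::real. 1 / x ^ 3)" "continuous_on {1..2} (\<lambda>x::real. x ^ 3)"
    "continuous_on {1..2} (\<lambda>x::real. x ^ 3 * ln x)"
    by (auto intro!: continuous_intros)
  note int = correction_moment(1)[OF this(1)] correction_moment(1)[OF this(2)] correction_moment(1)[OF this(3)]
  note step = set_integrable_bump_step_moments
  have "chi x / x ^ 3 = bump_step x / x ^ 3 + 1 * (correction a b c x * (1 / x ^ 3))" for x
    by (simp add: chi_def add_divide_distrib)
  note split1 = set_integral_eq_add_scaled[OF step(1) int(1) this]
  have "x ^ 3 * (1 - chi x) = x ^ 3 * (1 - bump_step x) + (- 1) * (correction a b c x * x ^ 3)" for x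
    by (simp add: chi_def algebra_simps)
  note split2 = set_integral_eq_add_scaled[OF step(2) int(2) this]
  have "x ^ 3 * ln x * (1 - chi x)
      = x ^ 3 * ln x * (1 - bump_step x) + (- 1) * (correction a b c x * (x ^ 3 * ln x))" for x
    by (simp add: chi_def algebra_simps)
  note split3 = set_integral_eq_add_scaled[OF step(3) int(3) this]
  show ?thesis
  proof (intro exI[of _ chi], unfold good_cutoff_def, intro conjI allI impI split1(1) split2(1) split3(1))
    show "smooth_nonneg chi"
      unfolding chi_def by (intro smooth_nonneg_add smooth_nonneg_bump_step smooth_nonneg_correction)
    show "chi x = 0" if "0 \<le> x \<and> x \<le> 1" for x
      using that by (simp add: chi_def bump_step_eq_0 correction_outside)
    show "chi x = 1" if "x \<ge> 2" for x
      using that by (simp add: chi_def bump_step_eq_1 correction_outside)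
    show "(LBINT x:{0<..}. chi x / x ^ 3) = 0"
      unfolding split1(2) correction_moments(1) \<beta>_def[symmetric]
      using \<open>\<beta> > 0\<close> by (simp add: a_def field_simps)
    show "(LBINT x:{0<..}. x ^ 3 * (1 - chi x)) = 0"
      unfolding split2(2) correction_moments(2) \<alpha>_def[symmetric]
      using \<open>\<alpha> > 0\<close> by (simp add: b_def)
    show "(LBINT x:{0<..}. x ^ 3 * ln x * (1 - chi x)) = 0"
      unfolding split3(2) correction_moments(3) \<alpha>_def[symmetric]
      using \<open>\<alpha> > 0\<close> by (simp add: c_def)
  qed
qed

theorem lemma4p28:
  shows "(\<exists>chi. good_cutoff chi) \<and>
    (\<forall>chi. good_cutoff chi \<longrightarrow>
      (\<exists>C>0. \<forall>\<eta>. 0 < \<eta> \<and> \<eta> < 1 \<longrightarrow>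
          \<bar>hankel1 (\<lambda>x. chi x / x ^ 5) \<eta>\<bar> \<le> C * \<eta> ^ 3 * jbr (ln \<eta>)) \<and>
      (\<forall>k::real. k \<ge> 0 \<longrightarrow> (\<exists>Ck>0. \<forall>\<eta>\<ge>1.
          \<bar>hankel1 (\<lambda>x. chi x / x ^ 5) \<eta>\<bar> \<le> Ck / \<eta> powr k)))"
proof (intro conjI allI impI)
  show "\<exists>chi. good_cutoff chi"
    by (rule exists_good_cutoff)
next
  fix chi assume good: "good_cutoff chi"
  then obtain D where D: "\<And>x. x \<ge> 0 \<Longrightarrow> D 0 x = chi x"
    "\<And>n x. x \<ge> 0 \<Longrightarrow> (D n has_real_derivative D (Suc n) x) (at x within {0..})"
    unfolding good_cutoff_def smooth_nonneg_def by blast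
  interpret smooth_cutoff chi D
    using D good by unfold_locales (auto simp: good_cutoff_def)
  show "\<exists>C>0. \<forall>\<eta>. 0 < \<eta> \<and> \<eta> < 1 \<longrightarrow> \<bar>hankel1 (\<lambda>x. chi x / x ^ 5) \<eta>\<bar> \<le> C * \<eta> ^ 3 * jbr (ln \<eta>)"
    using good by (intro hankel1_small_eta_bound) (auto simp: good_cutoff_def)
  fix k :: real assume "k \<ge> 0"
  then show "\<exists>Ck>0. \<forall>\<eta>\<ge>1. \<bar>hankel1 (\<lambda>x. chi x / x ^ 5) \<eta>\<bar> \<le> Ck / \<eta> powr k"
    by (rule hankel1_decay_powr)
qed

end
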